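(* Let a regular network on $n$ cells with adjacency matrix $A$ be given. A subspace $S\subseteq\mathbb{C}^n$ is a synchrony subspace if and only if $S$ is a polydiagonal and $S=J_1\oplus\cdots\oplus J_m$ for some special Jordan subspaces $J_1,\dots,J_m$ to the network.
   Context: A regular network is a finite directed graph on cells $1,\dots,n$ (loops and multiple arrows allowed) in which every cell receives the same number $v$ of arrows (the valency). Its adjacency matrix $A=[a_{ij}]$ has $a_{ij}$ equal to the number of arrows cell $i$ receives from cell $j$; every row sum is $v$. $A$ acts on the total phase space $\mathbb{C}^n$ (each cell phase space taken to be $\mathbb{C}$). A polydiagonal is a subspace of $\mathbb{C}^n$ of the form $\{x : x_i=x_j \text{ for all } (i,j)\in R\}$ for some (possibly empty) set $R$ of index pairs. A synchrony subspace is a polydiagonal that is invariant under $A$ (by a theorem of Golubitsky, Stewart and Török this is equivalent to being flow-invariant for all admissible vector fields of the network). $F=\{x_1=\cdots=x_n\}$ is the fully synchrony subspace. $P(W)$ is the smallest polydiagonal containing a subspace $W$. For an eigenvalue $\lambda$ of $A$, the generalized eigenspace is $G_\lambda=\operatorname{Ker}(A-\lambda I)^p$ for $p$ large. A Jordan chain of length $k$ for $\lambda$ is a sequence of nonzero vectors $x_1,\dots,x_k$ with $(A-\lambda I)x_1=0$ and $(A-\lambda I)x_i=x_{i-1}$ for $2\le i\le k$; a Jordan subspace is the span of a Jordan chain. A Jordan subspace $W$ of a generalized eigenspace $G$ is a special Jordan subspace to the network if for every Jordan subspace $U$ of $G$ with $\dim U=\dim W$ and $P(U)\subseteq P(W)$,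 either $P(U)=P(W)$ or $U=F$. *)

theory Defs
  imports "HOL-Analysis.Analysis"
begin

text \<open>Cells are the elements of a finite type 'n. The adjacency matrix has natural-number
entries; a_ij = number of arrows cell i receives from cell j.\<close>

definition regular_network :: "nat^'n^'n \<Rightarrow> bool" where
  "regular_network A \<longleftrightarrow> (\<exists>v. \<forall>i. (\<Sum>j\<in>UNIV. A $ i $ j) = v)"

definition cmat :: "nat^'n^'n \<Rightarrow> complex^'n^'n" where
  "cmat A = (\<chi> i j. of_nat (A $ i $ j))"

definition polydiagonal :: "(complex^'n) set \<Rightarrow> bool" where
  "polydiagonal S \<longleftrightarrow> (\<exists>R :: ('n \<times> 'n) set. S = {x. \<forall>(i,j)\<in>R. x $ i = x $ j})"

definition synchrony_subspace :: "nat^'n^'n \<Rightarrow> (complex^'n) set \<Rightarrow> bool" where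
  "synchrony_subspace A S \<longleftrightarrow> polydiagonal S \<and> (\<forall>x\<in>S. cmat A *v x \<in> S)"

definition full_sync :: "(complex^'n) set" where
  "full_sync = {x. \<forall>i j. x $ i = x $ j}"

definition polyclosure :: "(complex^'n) set \<Rightarrow> (complex^'n) set" where
  "polyclosure W = \<Inter> {S. polydiagonal S \<and> W \<subseteq> S}"

definition jordan_chain :: "nat^'n^'n \<Rightarrow> complex \<Rightarrow> nat \<Rightarrow> (nat \<Rightarrow> complex^'n) \<Rightarrow> bool" where
  "jordan_chain A lam k x \<longleftrightarrow> k \<ge> 1 \<and> (\<forall>i<k. x i \<noteq> 0)
     \<and> cmat A *v x 0 - lam *s x 0 = 0
     \<and> (\<forall>i. 1 \<le> i \<and> i < k \<longrightarrow> cmat A *v x i - lam *s x i = x (i - 1))"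

definition jordan_subspace :: "nat^'n^'n \<Rightarrow> complex \<Rightarrow> (complex^'n) set \<Rightarrow> bool" where
  "jordan_subspace A lam W \<longleftrightarrow> (\<exists>k x. jordan_chain A lam k x \<and> W = vec.span (x ` {..<k}))"

definition special_jordan_subspace :: "nat^'n^'n \<Rightarrow> (complex^'n) set \<Rightarrow> bool" where
  "special_jordan_subspace A W \<longleftrightarrow> (\<exists>lam. jordan_subspace A lam W \<and>
     (\<forall>U. jordan_subspace A lam U \<and> vec.dim U = vec.dim W \<and> polyclosure U \<subseteq> polyclosure W
          \<longrightarrow> polyclosure U = polyclosure W \<or> U = full_sync))"

definition is_direct_sum :: "(complex^'n) set \<Rightarrow> nat \<Rightarrow> (nat \<Rightarrow> (complex^'n) set) \<Rightarrow> bool" where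
  "is_direct_sum S m J \<longleftrightarrow>
     S = {(\<Sum>k<m. y k) | y. \<forall>k<m. y k \<in> J k} \<and>
     (\<forall>y. (\<forall>k<m. y k \<in> J k) \<and> (\<Sum>k<m. y k) = 0 \<longrightarrow> (\<forall>k<m. y k = 0))"

end

theory Submission
  imports Defs "HOL-Computational_Algebra.Fundamental_Theorem_Algebra"
begin

text \<open>Jordan subspaces are invariant under \<open>A\<close>, hence so is any direct sum of them; this gives
  one direction.  Conversely, a synchrony subspace \<open>S\<close> is \<open>A\<close>-invariant, so it has a basis made of
  Jordan chains of \<open>A\<close> lying in \<open>S\<close>.  Among all such bases take one minimising the sum of the
  dimensions of the polydiagonal closures of the spans of its chains.  If one chain spanned a
  non-special Jordan subspace, a competing Jordan subspace with smaller closure could be exchanged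
  into the basis, decreasing that sum.  Regularity is used only to see that the eigenvector of the
  competitor is not fully synchronous: the constant vector is an eigenvector for the valency with no
  generalized eigenvector above it, so a Jordan subspace through it is the full synchrony subspace,
  which the definition of special Jordan subspace does not count as a competitor.\<close>

definition eig_shift :: "nat^'n^'n \<Rightarrow> complex \<Rightarrow> complex^'n \<Rightarrow> complex^'n" where
  "eig_shift A lam z = cmat A *v z - lam *s z"

lemma eig_shift_add: "eig_shift A lam (a + b) = eig_shift A lam a + eig_shift A lam b"
  by (simp add: eig_shift_def matrix_vector_right_distrib vector_ssub_ldistrib algebra_simps)

lemma eig_shift_scale: "eig_shift A lam (c *s a) = c *s eig_shift A lam a"
  by (simp add: eig_shift_def vector_scalar_commute vector_ssub_ldistrib algebra_simps)

lemma eig_shift_zero[simp]: "eig_shift A lam 0 = 0"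
  by (simp add: eig_shift_def)

lemma eig_shift_diff: "eig_shift A lam (a - b) = eig_shift A lam a - eig_shift A lam b"
  by (simp add: eig_shift_def matrix_vector_mult_diff_distrib vector_ssub_ldistrib algebra_simps)

lemma eig_shift_sum: "eig_shift A lam (\<Sum>i\<in>I. f i) = (\<Sum>i\<in>I. eig_shift A lam (f i))"
  by (induction I rule: infinite_finite_induct) (auto simp: eig_shift_add)

lemma eig_shift_change: "eig_shift A mu z = eig_shift A lam z + (lam - mu) *s z"
  by (simp add: eig_shift_def algebra_simps)

definition chain_vecs :: "nat \<Rightarrow> (nat \<Rightarrow> nat) \<Rightarrow> (nat \<Rightarrow> nat \<Rightarrow> complex^'n) \<Rightarrow> (complex^'n) set" where
  "chain_vecs m k x = {x i t | i t. i < m \<and> t < k i}"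

definition chains_indep :: "nat \<Rightarrow> (nat \<Rightarrow> nat) \<Rightarrow> (nat \<Rightarrow> nat \<Rightarrow> complex^'n) \<Rightarrow> bool" where
  "chains_indep m k x \<longleftrightarrow> (\<forall>c. (\<Sum>i<m. \<Sum>t<k i. c i t *s x i t) = 0 \<longrightarrow> (\<forall>i<m. \<forall>t<k i. c i t = 0))"

lemma if_scale: "(if P then a else 0) *s v = (if P then a *s (v::complex^'n) else 0)"
  by simp

lemma double_sum_delta:
  fixes x :: "nat \<Rightarrow> nat \<Rightarrow> complex^'n"
  assumes "i < m" "t < k i"
  shows "(\<Sum>i'<m. \<Sum>t'<k i'. (if i' = i \<and> t' = t then a else 0) *s x i' t') = a *s x i t"
proof -
  have "(\<Sum>i'<m. \<Sum>t'<k i'. (if i' = i \<and> t' = t then a else 0) *s x i' t')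
      = (\<Sum>i'<m. if i' = i then a *s x i t else 0)"
    by (rule sum.cong) (auto simp: if_scale sum.delta assms)
  also have "\<dots> = a *s x i t" using assms by (simp add: sum.delta)
  finally show ?thesis .
qed

lemma subspace_chain_combinations: "vec.subspace {(\<Sum>i<m. \<Sum>t<k i. c i t *s x i t) | c. True}"
  unfolding vec.subspace_def
proof (intro conjI allI impI ballI)
  show "0 \<in> {(\<Sum>i<m. \<Sum>t<k i. c i t *s x i t) | c. True}"
    by (rule CollectI, rule exI[of _ "\<lambda>_ _. 0"]) simp
next
  fix a y assume "y \<in> {(\<Sum>i<m. \<Sum>t<k i. c i t *s x i t) | c. True}"
  then obtain c where "y = (\<Sum>i<m. \<Sum>t<k i. c i t *s x i t)" by auto
  then show "a *s y \<in> {(\<Sum>i<m. \<Sum>t<k i. c i t *s x i t) | c. True}"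
    by (intro CollectI exI[of _ "\<lambda>i t. a * c i t"])
       (simp add: vec.scale_sum_right vector_smult_assoc)
next
  fix y z assume "y \<in> {(\<Sum>i<m. \<Sum>t<k i. c i t *s x i t) | c. True}"
    "z \<in> {(\<Sum>i<m. \<Sum>t<k i. c i t *s x i t) | c. True}"
  then obtain c d where "y = (\<Sum>i<m. \<Sum>t<k i. c i t *s x i t)"
    "z = (\<Sum>i<m. \<Sum>t<k i. d i t *s x i t)" by auto
  then show "y + z \<in> {(\<Sum>i<m. \<Sum>t<k i. c i t *s x i t) | c. True}"
    by (intro CollectI exI[of _ "\<lambda>i t. c i t + d i t"])
       (simp add: sum.distrib vector_sadd_rdistrib)
qed

lemma span_chain_vecs:
  fixes x :: "nat \<Rightarrow> nat \<Rightarrow> complex^'n"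
  shows "vec.span (chain_vecs m k x) = {(\<Sum>i<m. \<Sum>t<k i. c i t *s x i t) | c. True}"
proof
  show "vec.span (chain_vecs m k x) \<subseteq> {(\<Sum>i<m. \<Sum>t<k i. c i t *s x i t) | c. True}"
  proof (rule vec.span_minimal[OF _ subspace_chain_combinations], rule subsetI)
    fix y assume "y \<in> chain_vecs m k x"
    then obtain i t where it: "i < m" "t < k i" "y = x i t" by (auto simp: chain_vecs_def)
    show "y \<in> {(\<Sum>i<m. \<Sum>t<k i. c i t *s x i t) | c. True}"
      by (rule CollectI, rule exI[of _ "\<lambda>i' t'. if i' = i \<and> t' = t then 1 else 0"])
         (simp add: double_sum_delta it)
  qed
next
  show "{(\<Sum>i<m. \<Sum>t<k i. c i t *s x i t) | c. True} \<subseteq> vec.span (chain_vecs m k x)"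
  proof (rule subsetI)
    fix y assume "y \<in> {(\<Sum>i<m. \<Sum>t<k i. c i t *s x i t) | c. True}"
    then obtain c where y: "y = (\<Sum>i<m. \<Sum>t<k i. c i t *s x i t)" by auto
    have "x i t \<in> chain_vecs m k x" if "i < m" "t < k i" for i t
      using that unfolding chain_vecs_def by blast
    then show "y \<in> vec.span (chain_vecs m k x)"
      unfolding y by (intro vec.span_sum vec.span_scale vec.span_base) auto
  qed
qed

definition chain_index :: "nat \<Rightarrow> (nat \<Rightarrow> nat) \<Rightarrow> (nat \<times> nat) set" where
  "chain_index m k = Sigma {..<m} (\<lambda>i. {..<k i})"

lemma finite_chain_index[simp]: "finite (chain_index m k)"
  by (simp add: chain_index_def)

lemma card_chain_index: "card (chain_index m k) = (\<Sum>i<m. k i)"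
  by (simp add: chain_index_def card_SigmaI)

lemma chain_vecs_chain_index: "chain_vecs m k x = (\<lambda>(i,t). x i t) ` chain_index m k"
  by (auto simp: chain_vecs_def chain_index_def)

lemma sum_chain_index: "(\<Sum>i<m. \<Sum>t<k i. h i t) = (\<Sum>p\<in>chain_index m k. h (fst p) (snd p))"
  unfolding chain_index_def by (subst sum.Sigma) (auto simp: case_prod_beta)

lemma nontrivial_relation_if_card_gt_dim:
  fixes f :: "'i \<Rightarrow> complex^'n"
  assumes "finite I" "card I > vec.dim (f ` I)"
  shows "\<exists>c. (\<Sum>i\<in>I. c i *s f i) = 0 \<and> (\<exists>i\<in>I. c i \<noteq> 0)"
proof (cases "inj_on f I")
  case False
  then obtain i j where ij: "i \<in> I" "j \<in> I" "i \<noteq> j" "f i = f j"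
    unfolding inj_on_def by blast
  define c where "c = (\<lambda>l. if l = i then (1::complex) else if l = j then -1 else 0)"
  have "(\<Sum>l\<in>I. c l *s f l) = (\<Sum>l\<in>I. (if l = i then f i else 0)) - (\<Sum>l\<in>I. (if l = j then f j else 0))"
    unfolding sum_subtractf[symmetric]
  proof (rule sum.cong)
    fix l assume "l \<in> I"
    show "c l *s f l = (if l = i then f i else 0) - (if l = j then f j else 0)"
      using ij(3) by (cases "l = i"; cases "l = j") (simp_all add: c_def vector_smult_lneg)
  qed simp
  also have "\<dots> = 0" using ij assms(1) by (simp only: sum.delta) simp
  finally show ?thesis using ij by (intro exI[of _ c]) (auto simp: c_def)
next
  case True
  have "card (f ` I) = card I" using True by (simp add: card_image)
  have "\<not> vec.independent (f ` I)"
  proof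
    assume "vec.independent (f ` I)"
    then have "vec.dim (f ` I) = card (f ` I)" by (rule vec.dim_eq_card_independent)
    with assms \<open>card (f ` I) = card I\<close> show False by simp
  qed
  then obtain u where u: "\<exists>v\<in>f ` I. u v \<noteq> 0" "(\<Sum>v\<in>f ` I. u v *s v) = 0"
    using vec.dependent_finite[of "f ` I"] assms(1) by auto
  have "(\<Sum>i\<in>I. u (f i) *s f i) = 0"
    using u(2) by (simp add: sum.reindex[OF True])
  then show ?thesis using u(1) by (intro exI[of _ "u \<circ> f"]) auto
qed

lemma independent_coefficients_zero:
  fixes g :: "'i \<Rightarrow> complex^'n"
  assumes "finite I" "inj_on g I" "vec.independent (g ` I)" "(\<Sum>p\<in>I. c p *s g p) = 0" "p \<in> I"
  shows "c p = 0"
proof -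
  define u where "u = (\<lambda>v. c (the_inv_into I g v))"
  have "(\<Sum>v\<in>g ` I. u v *s v) = (\<Sum>p\<in>I. u (g p) *s g p)"
    by (simp add: sum.reindex[OF assms(2)])
  also have "\<dots> = (\<Sum>p\<in>I. c p *s g p)"
    by (rule sum.cong) (auto simp: u_def the_inv_into_f_f[OF assms(2)])
  finally have "(\<Sum>v\<in>g ` I. u v *s v) = 0" using assms(4) by simp
  then have "\<forall>v\<in>g ` I. u v = 0"
    using vec.dependent_finite[of "g ` I"] assms(1,3) by auto
  then show ?thesis using assms(5) by (auto simp: u_def the_inv_into_f_f[OF assms(2)])
qed

lemma chains_indep_if_spanning:
  fixes x :: "nat \<Rightarrow> nat \<Rightarrow> complex^'n"
  assumes "chain_vecs m k x \<subseteq> V" "V \<subseteq> vec.span (chain_vecs m k x)" "(\<Sum>i<m. k i) \<le> vec.dim V"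
  shows "chains_indep m k x"
  unfolding chains_indep_def
proof (intro allI impI)
  fix c i t assume rel: "(\<Sum>i<m. \<Sum>t<k i. c i t *s x i t) = 0" and it: "i < m" "t < k i"
  define g where "g = (\<lambda>(i,t). x i t)"
  have vI: "chain_vecs m k x = g ` chain_index m k" by (simp add: chain_vecs_chain_index g_def)
  have d1: "vec.dim V \<le> card (g ` chain_index m k)"
    using vec.dim_le_card[of V "g ` chain_index m k"] assms(2) vI by simp
  have d2: "card (g ` chain_index m k) \<le> card (chain_index m k)" by (rule card_image_le) simp
  have cI: "card (chain_index m k) \<le> vec.dim V" using assms(3) card_chain_index by simp
  have inj: "inj_on g (chain_index m k)"
    using d1 d2 cI by (intro eq_card_imp_inj_on) auto
  have ind: "vec.independent (g ` chain_index m k)"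
    using vec.card_le_dim_spanning[of "g ` chain_index m k" V] assms(1,2) vI d1 d2 cI by auto
  have "(\<Sum>p\<in>chain_index m k. c (fst p) (snd p) *s g p) = 0"
    using rel by (simp add: sum_chain_index g_def case_prod_beta)
  from independent_coefficients_zero[OF finite_chain_index inj ind this, of "(i,t)"] it
  show "c i t = 0" by (simp add: chain_index_def)
qed

lemma dim_chain_vecs:
  fixes x :: "nat \<Rightarrow> nat \<Rightarrow> complex^'n"
  assumes "chains_indep m k x"
  shows "vec.dim (chain_vecs m k x) = (\<Sum>i<m. k i)"
proof -
  define g where "g = (\<lambda>(i,t). x i t)"
  have vI: "chain_vecs m k x = g ` chain_index m k" by (simp add: chain_vecs_chain_index g_def)
  have le: "vec.dim (chain_vecs m k x) \<le> (\<Sum>i<m. k i)"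
    using vec.dim_le_card[of "chain_vecs m k x" "g ` chain_index m k"] card_image_le[of "chain_index m k" g] vI card_chain_index
    by (simp add: vec.span_superset)
  show ?thesis
  proof (rule ccontr)
    assume "vec.dim (chain_vecs m k x) \<noteq> (\<Sum>i<m. k i)"
    with le have "card (chain_index m k) > vec.dim (g ` chain_index m k)" using vI card_chain_index by simp
    from nontrivial_relation_if_card_gt_dim[OF finite_chain_index this] obtain c p where
      c: "(\<Sum>p\<in>chain_index m k. c p *s g p) = 0" "p \<in> chain_index m k" "c p \<noteq> 0" by blast
    have "(\<Sum>i<m. \<Sum>t<k i. c (i,t) *s x i t) = 0"
      using c(1) by (simp add: sum_chain_index g_def case_prod_beta)
    with assms c(2,3) show False unfolding chains_indep_def chain_index_def by auto
  qed
qed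

lemma jordan_chain_length_pos: "jordan_chain A lam k x \<Longrightarrow> k \<ge> 1"
  by (simp add: jordan_chain_def)
lemma jordan_chain_nonzero: "jordan_chain A lam k x \<Longrightarrow> t < k \<Longrightarrow> x t \<noteq> 0"
  by (simp add: jordan_chain_def)
lemma jordan_chain_eigvec: "jordan_chain A lam k x \<Longrightarrow> eig_shift A lam (x 0) = 0"
  by (simp add: jordan_chain_def eig_shift_def)
lemma jordan_chain_step: "jordan_chain A lam k x \<Longrightarrow> Suc t < k \<Longrightarrow> eig_shift A lam (x (Suc t)) = x t"
proof -
  assume a: "jordan_chain A lam k x" "Suc t < k"
  then have "\<forall>i. 1 \<le> i \<and> i < k \<longrightarrow> cmat A *v x i - lam *s x i = x (i - 1)"
    unfolding jordan_chain_def by blast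
  then have "cmat A *v x (Suc t) - lam *s x (Suc t) = x (Suc t - 1)" using a(2) by simp
  then show ?thesis by (simp add: eig_shift_def)
qed

lemma jordan_chain_shift: "jordan_chain A lam k x \<Longrightarrow> t < k \<Longrightarrow> eig_shift A lam (x t) = (if t = 0 then 0 else x (t - 1))"
proof -
  assume a: "jordan_chain A lam k x" "t < k"
  show ?thesis
  proof (cases t)
    case 0 then show ?thesis using jordan_chain_eigvec[OF a(1)] by simp
  next
    case (Suc s) then show ?thesis using jordan_chain_step[OF a(1), of s] a(2) by simp
  qed
qed

lemma jordan_chain_prefix: "jordan_chain A lam (Suc k) x \<Longrightarrow> k \<ge> 1 \<Longrightarrow> jordan_chain A lam k x"
  unfolding jordan_chain_def by (metis less_Suc_eq)

lemma jordan_chainI: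
  assumes "k \<ge> 1" "\<And>t. t < k \<Longrightarrow> x t \<noteq> 0" "eig_shift A lam (x 0) = 0"
    "\<And>t. Suc t < k \<Longrightarrow> eig_shift A lam (x (Suc t)) = x t"
  shows "jordan_chain A lam k x"
proof -
  have a: "\<forall>i<k. x i \<noteq> 0" using assms(2) by blast
  have b: "cmat A *v x 0 - lam *s x 0 = 0" using assms(3) by (simp add: eig_shift_def)
  have c: "\<forall>i. 1 \<le> i \<and> i < k \<longrightarrow> cmat A *v x i - lam *s x i = x (i - 1)"
  proof (intro allI impI)
    fix i assume i: "1 \<le> i \<and> i < k"
    then obtain t where t: "i = Suc t" by (cases i) auto
    then have "Suc t < k" using i by simp
    then show "cmat A *v x i - lam *s x i = x (i - 1)" using assms(4)[of t] t by (simp add: eig_shift_def)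
  qed
  show ?thesis unfolding jordan_chain_def using assms(1) a b c by blast
qed

lemma jordan_chain_coeffs_zero:
  assumes "jordan_chain A lam k x" "(\<Sum>t<k. c t *s x t) = 0" "t < k"
  shows "c t = 0"
  using assms
proof (induction k arbitrary: c t)
  case 0 then show ?case by simp
next
  case (Suc k)
  show ?case
  proof (cases "k = 0")
    case True
    have "c 0 *s x 0 = 0" using Suc.prems(2) True by simp
    then have "c 0 = 0" using jordan_chain_nonzero[OF Suc.prems(1), of 0] by simp
    then show ?thesis using Suc.prems(3) True by simp
  next
    case False
    have ch: "jordan_chain A lam k x" using jordan_chain_prefix[OF Suc.prems(1)] False by simp
    have "eig_shift A lam (\<Sum>t<Suc k. c t *s x t) = 0" by (simp only: Suc.prems(2) eig_shift_zero)
    then have "(\<Sum>t<Suc k. c t *s eig_shift A lam (x t)) = 0" by (simp only: eig_shift_sum eig_shift_scale)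
    then have "c 0 *s eig_shift A lam (x 0) + (\<Sum>t<k. c (Suc t) *s eig_shift A lam (x (Suc t))) = 0"
      by (simp del: sum.lessThan_Suc add: sum.lessThan_Suc_shift)
    moreover have "(\<Sum>t<k. c (Suc t) *s eig_shift A lam (x (Suc t))) = (\<Sum>t<k. c (Suc t) *s x t)"
      by (rule sum.cong) (auto simp: jordan_chain_step[OF Suc.prems(1)])
    ultimately have "(\<Sum>t<k. c (Suc t) *s x t) = 0"
      using jordan_chain_eigvec[OF Suc.prems(1)] by simp
    then have cS: "\<forall>t<k. c (Suc t) = 0" using Suc.IH[OF ch, of "\<lambda>t. c (Suc t)"] by blast
    then have "(\<Sum>t<k. c (Suc t) *s x (Suc t)) = 0" by simp
    then have "c 0 *s x 0 = 0" using Suc.prems(2) by (simp del: sum.lessThan_Suc add: sum.lessThan_Suc_shift)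
    then have c0: "c 0 = 0" using jordan_chain_nonzero[OF Suc.prems(1), of 0] by simp
    show ?thesis using Suc.prems(3) cS c0 by (cases t) auto
  qed
qed

lemma chain_vecs_single: "chain_vecs (Suc 0) (\<lambda>_. k) (\<lambda>_. x) = x ` {..<k}"
  by (auto simp: chain_vecs_def)

lemma jordan_chain_chains_indep: "jordan_chain A lam k x \<Longrightarrow> chains_indep (Suc 0) (\<lambda>_. k) (\<lambda>_. x)"
  unfolding chains_indep_def using jordan_chain_coeffs_zero by auto

lemma dim_jordan_chain_span:
  assumes "jordan_chain A lam k x"
  shows "vec.dim (vec.span (x ` {..<k})) = k"
proof -
  have "vec.dim (chain_vecs (Suc 0) (\<lambda>_. k) (\<lambda>_. x)) = (\<Sum>i<Suc 0. k)"
    by (rule dim_chain_vecs[OF jordan_chain_chains_indep[OF assms]])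
  then show ?thesis by (simp add: chain_vecs_single vec.dim_span)
qed

lemma subspace_eig_shift_preimage: "vec.subspace {z. eig_shift A r z \<in> vec.span H}"
  unfolding vec.subspace_def
  by (auto simp: eig_shift_add eig_shift_scale intro: vec.span_add vec.span_scale vec.span_zero)

lemma eig_shift_span:
  assumes "\<And>g. g \<in> G \<Longrightarrow> eig_shift A r g \<in> vec.span H" "z \<in> vec.span G"
  shows "eig_shift A r z \<in> vec.span H"
  using vec.span_induct[OF assms(2) subspace_eig_shift_preimage[of A r H]] assms(1) by blast

lemma eig_shift_chain_vec:
  assumes "jordan_chain A lam k x" "t < k"
  shows "eig_shift A r (x t) \<in> vec.span (x ` {..<k})"
proof -
  have "eig_shift A r (x t) = eig_shift A lam (x t) + (lam - r) *s x t" by (rule eig_shift_change)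
  moreover have "eig_shift A lam (x t) \<in> vec.span (x ` {..<k})"
    using jordan_chain_shift[OF assms] assms(2) by (auto intro: vec.span_base vec.span_zero)
  moreover have "x t \<in> vec.span (x ` {..<k})" using assms(2) by (auto intro: vec.span_base)
  ultimately show ?thesis by (metis vec.span_add vec.span_scale)
qed

lemma eig_shift_jordan_subspace:
  assumes "jordan_chain A lam k x" "z \<in> vec.span (x ` {..<k})"
  shows "eig_shift A r z \<in> vec.span (x ` {..<k})"
  using eig_shift_span[OF _ assms(2)] eig_shift_chain_vec[OF assms(1)] by blast

lemma cmat_eq_eig_shift_0: "cmat A *v z = eig_shift A 0 z"
  by (simp add: eig_shift_def)

lemma polyclosure_eq: "polyclosure W = {z. \<forall>a b. (\<forall>w\<in>W. w$a = w$b) \<longrightarrow> z$a = z$b}"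
proof -
  define R where "R = {(a,b). \<forall>w\<in>W. w$a = w$b}"
  define D where "D = {z::complex^'a. \<forall>(a,b)\<in>R. z$a = z$b}"
  have D: "polydiagonal D" unfolding polydiagonal_def D_def by blast
  have WD: "W \<subseteq> D" unfolding D_def R_def by auto
  have "polyclosure W \<subseteq> D" unfolding polyclosure_def using D WD by blast
  moreover have "D \<subseteq> polyclosure W"
  proof (unfold polyclosure_def, rule Inter_greatest)
    fix S assume "S \<in> {S. polydiagonal S \<and> W \<subseteq> S}"
    then obtain R' where S: "S = {x. \<forall>(i,j)\<in>R'. x $ i = x $ j}" "W \<subseteq> S"
      unfolding polydiagonal_def by blast
    have "R' \<subseteq> R" using S unfolding R_def by auto
    then show "D \<subseteq> S" unfolding D_def S(1) by auto
  qed
  ultimately show ?thesis unfolding D_def R_def by auto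
qed

lemma mem_polyclosure: "z \<in> polyclosure W \<longleftrightarrow> (\<forall>a b. (\<forall>w\<in>W. w$a = w$b) \<longrightarrow> z$a = z$b)"
  by (simp add: polyclosure_eq)

lemma polyclosure_superset: "W \<subseteq> polyclosure W"
  by (auto simp: mem_polyclosure)

lemma polyclosure_minimal: "polydiagonal S \<Longrightarrow> W \<subseteq> S \<Longrightarrow> polyclosure W \<subseteq> S"
  unfolding polyclosure_def by blast

lemma polydiagonal_subspace: "polydiagonal S \<Longrightarrow> vec.subspace S"
  unfolding polydiagonal_def vec.subspace_def by fastforce

lemma polydiagonal_polyclosure: "polydiagonal (polyclosure W)"
  unfolding polyclosure_eq polydiagonal_def
  by (rule exI[of _ "{(a,b). \<forall>w\<in>W. w$a = w$b}"]) auto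

lemma subspace_polyclosure: "vec.subspace (polyclosure W)"
  by (rule polydiagonal_subspace[OF polydiagonal_polyclosure])

lemma full_sync_nonzeroE:
  fixes u :: "complex^'n"
  assumes "u \<in> full_sync" "u \<noteq> 0"
  obtains a where "a \<noteq> 0" "\<And>j. u $ j = a"
proof -
  obtain i1 :: 'n where True by blast
  have "\<And>j. u $ j = u $ i1" using assms(1) unfolding full_sync_def by auto
  moreover from this have "u $ i1 \<noteq> 0" using assms(2) by (auto simp: vec_eq_iff)
  ultimately show thesis using that by blast
qed

lemma full_sync_eigval_eq_valency:
  fixes A :: "nat^'n^'n"
  assumes rows: "\<And>i. (\<Sum>j\<in>UNIV. A $ i $ j) = v"
    and u: "u \<in> full_sync" "u \<noteq> 0" and eig: "eig_shift A lam u = 0"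
  shows "lam = of_nat v"
proof -
  obtain a where a: "a \<noteq> 0" "\<And>j. u $ j = a" using full_sync_nonzeroE[OF u] by blast
  obtain i :: 'n where True by blast
  have "(\<Sum>j\<in>UNIV. of_nat (A $ i $ j) * a) - lam * a = 0"
    using arg_cong[OF eig, of "\<lambda>w. w $ i"] by (simp add: eig_shift_def cmat_def matrix_vector_mult_def a(2))
  then have "of_nat v * a - lam * a = 0"
    by (simp add: sum_distrib_right[symmetric] rows flip: of_nat_sum)
  then show ?thesis using a(1) by (simp add: algebra_simps)
qed

text \<open>A maximum principle: at a cell where \<open>Re (u1 $ j / a)\<close> is maximal, the row of
  \<open>A - v\<close> applied to \<open>u1 / a\<close> has real part at most \<open>0\<close>, while it should be \<open>1\<close>.\<close>

lemma no_preimage_of_full_sync: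
  fixes A :: "nat^'n^'n"
  assumes rows: "\<And>i. (\<Sum>j\<in>UNIV. A $ i $ j) = v"
    and pre: "eig_shift A (of_nat v) u1 = u0" and u0: "u0 \<in> full_sync" "u0 \<noteq> 0"
  shows False
proof -
  obtain a where a: "a \<noteq> 0" "\<And>j. u0 $ j = a" using full_sync_nonzeroE[OF u0] by blast
  define w where "w = (\<lambda>j. Re (u1 $ j / a))"
  have Re_of_nat_mult: "Re (of_nat n * y) = real n * Re y" for n y by simp
  have fin: "finite (range w)" by simp
  have "Max (range w) \<in> range w" using Max_in[OF fin] by simp
  then obtain i0 where i0: "w i0 = Max (range w)" by (metis rangeE)
  have wle: "\<And>j. w j \<le> w i0" unfolding i0 using Max_ge[OF fin] by simp
  have "(\<Sum>j\<in>UNIV. of_nat (A $ i0 $ j) * u1 $ j) - of_nat v * u1 $ i0 = a"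
    using arg_cong[OF pre, of "\<lambda>w. w $ i0"] by (simp add: eig_shift_def cmat_def matrix_vector_mult_def a(2))
  then have "((\<Sum>j\<in>UNIV. of_nat (A $ i0 $ j) * u1 $ j) - of_nat v * u1 $ i0) / a = 1"
    using a(1) by simp
  then have "Re ((\<Sum>j\<in>UNIV. of_nat (A $ i0 $ j) * (u1 $ j / a)) - of_nat v * (u1 $ i0 / a)) = 1"
    by (simp add: diff_divide_distrib sum_divide_distrib)
  then have eq: "(\<Sum>j\<in>UNIV. real (A $ i0 $ j) * w j) - real v * w i0 = 1"
    unfolding w_def minus_complex.sel Re_sum Re_of_nat_mult .
  have "(\<Sum>j\<in>UNIV. real (A $ i0 $ j) * w j) \<le> (\<Sum>j\<in>UNIV. real (A $ i0 $ j) * w i0)"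
    by (rule sum_mono) (simp add: wle mult_left_mono)
  also have "\<dots> = real v * w i0"
    using rows[of i0] by (simp add: sum_distrib_right[symmetric] of_nat_sum[symmetric])
  finally show False using eq by simp
qed

lemma regular_network_full_sync_chain_length:
  assumes "regular_network A" "jordan_chain A lam k u" "u 0 \<in> full_sync"
  shows "k = 1"
proof (rule ccontr)
  assume "k \<noteq> 1"
  then have k: "Suc 0 < k" using jordan_chain_length_pos[OF assms(2)] by simp
  obtain v where rows: "\<And>i. (\<Sum>j\<in>UNIV. A $ i $ j) = v"
    using assms(1) unfolding regular_network_def by blast
  have u0: "u 0 \<noteq> 0" using jordan_chain_nonzero[OF assms(2)] k by simp
  have "lam = of_nat v"
    using full_sync_eigval_eq_valency[OF rows assms(3) u0 jordan_chain_eigvec[OF assms(2)]] .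
  then show False
    using no_preimage_of_full_sync[OF rows _ assms(3) u0] jordan_chain_step[OF assms(2) k] by simp
qed

lemma span_full_sync_vec:
  assumes "u \<in> full_sync" "u \<noteq> 0"
  shows "vec.span {u} = full_sync"
proof -
  obtain a where a: "a \<noteq> 0" "\<And>j. u $ j = a" using full_sync_nonzeroE[OF assms] by blast
  have "z = (z $ j / a) *s u" if "z \<in> full_sync" for z j
    using that a unfolding full_sync_def by (auto simp: vec_eq_iff)
  then show ?thesis
    by (auto simp: vec.span_singleton full_sync_def a(2))
qed

lemma jordan_chain_eigvec_not_full_sync:
  assumes "regular_network A" "jordan_chain A lam k u" "vec.span (u ` {..<k}) \<noteq> full_sync"
  shows "u 0 \<notin> full_sync"
proof
  assume uF: "u 0 \<in> full_sync"
  have "k = 1" using regular_network_full_sync_chain_length[OF assms(1,2) uF] .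
  then have "vec.span (u ` {..<k}) = full_sync"
    using span_full_sync_vec[OF uF] jordan_chain_nonzero[OF assms(2)] by (simp add: lessThan_Suc)
  with assms(3) show False ..
qed

definition mat_pow_act :: "nat^'n^'n \<Rightarrow> nat \<Rightarrow> complex^'n \<Rightarrow> complex^'n" where
  "mat_pow_act A j z = (((*v) (cmat A)) ^^ j) z"

definition poly_act :: "nat^'n^'n \<Rightarrow> complex poly \<Rightarrow> complex^'n \<Rightarrow> complex^'n" where
  "poly_act A p z = (\<Sum>j<Suc (degree p). coeff p j *s mat_pow_act A j z)"

lemma mat_pow_act_Suc: "mat_pow_act A (Suc j) z = cmat A *v mat_pow_act A j z"
  by (simp add: mat_pow_act_def)

lemma matrix_vector_mult_sum: "(M::complex^'n^'m) *v (\<Sum>i\<in>I. f i) = (\<Sum>i\<in>I. M *v f i)"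
  by (induction I rule: infinite_finite_induct) (auto simp: matrix_vector_right_distrib)

lemma poly_act_bound:
  assumes "degree p < n"
  shows "poly_act A p z = (\<Sum>j<n. coeff p j *s mat_pow_act A j z)"
  unfolding poly_act_def
  by (rule sum.mono_neutral_right[symmetric]) (use assms in \<open>auto simp: coeff_eq_0\<close>)

lemma poly_act_0[simp]: "poly_act A 0 z = 0"
  by (simp add: poly_act_def)

lemma poly_act_pCons: "poly_act A (pCons a p) z = a *s z + cmat A *v poly_act A p z"
proof -
  have d: "degree (pCons a p) < Suc (Suc (degree p))"
    using degree_pCons_le[of a p] by simp
  have "poly_act A (pCons a p) z = (\<Sum>j<Suc (Suc (degree p)). coeff (pCons a p) j *s mat_pow_act A j z)"
    by (rule poly_act_bound[OF d])
  also have "\<dots> = a *s z + (\<Sum>j<Suc (degree p). coeff p j *s mat_pow_act A (Suc j) z)"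
    by (simp del: sum.lessThan_Suc add: sum.lessThan_Suc_shift mat_pow_act_def)
  also have "\<dots> = a *s z + cmat A *v poly_act A p z"
    by (simp del: sum.lessThan_Suc add: poly_act_def matrix_vector_mult_sum mat_pow_act_Suc vector_scalar_commute)
  finally show ?thesis .
qed

lemma poly_act_smult: "poly_act A (smult c p) z = c *s poly_act A p z"
proof -
  have d: "degree (smult c p) < Suc (degree p)" using degree_smult_le[of c p] by simp
  show ?thesis
    by (simp add: poly_act_bound[OF d] poly_act_def vec.scale_sum_right vector_smult_assoc)
qed

lemma poly_act_add: "poly_act A (p + q) z = poly_act A p z + poly_act A q z"
proof -
  define n where "n = Suc (max (degree p) (degree q))"
  have d1: "degree (p + q) < n" using degree_add_le_max[of p q] n_def by simp
  have d2: "degree p < n" "degree q < n" using n_def by auto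
  show ?thesis
    by (simp add: poly_act_bound[OF d1] poly_act_bound[OF d2(1)] poly_act_bound[OF d2(2)]
        vector_sadd_rdistrib sum.distrib)
qed

lemma poly_act_mult: "poly_act A (p * q) z = poly_act A p (poly_act A q z)"
proof (induction p)
  case 0 then show ?case by simp
next
  case (pCons a p)
  have "poly_act A (pCons a p * q) z = poly_act A (smult a q + pCons 0 (p * q)) z"
    by (simp add: mult_pCons_left)
  also have "\<dots> = a *s poly_act A q z + cmat A *v poly_act A p (poly_act A q z)"
    by (simp add: poly_act_add poly_act_smult poly_act_pCons pCons.IH)
  also have "\<dots> = poly_act A (pCons a p) (poly_act A q z)"
    by (simp add: poly_act_pCons)
  finally show ?case .
qed

lemma poly_act_linear: "poly_act A [:-r, 1:] z = eig_shift A r z"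
  by (simp add: poly_act_pCons eig_shift_def vector_smult_lneg)

lemma poly_act_const: "poly_act A [:c:] z = c *s z"
  by (simp add: poly_act_pCons)

lemma mat_pow_act_in:
  assumes "vec.subspace V" "\<And>z. z \<in> V \<Longrightarrow> cmat A *v z \<in> V" "z \<in> V"
  shows "mat_pow_act A j z \<in> V"
  by (induction j) (auto simp: mat_pow_act_def assms)

lemma annihilating_poly_exists:
  assumes "vec.subspace V" "\<And>z. z \<in> V \<Longrightarrow> cmat A *v z \<in> V" "z0 \<in> V"
  shows "\<exists>p. p \<noteq> 0 \<and> poly_act A p z0 = 0"
proof -
  define N where "N = vec.dim V"
  define f where "f = (\<lambda>j. mat_pow_act A j z0)"
  have fV: "f ` {..<Suc N} \<subseteq> V" unfolding f_def using mat_pow_act_in[OF assms] by blast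
  have "vec.dim (f ` {..<Suc N}) \<le> vec.dim V"
    by (rule vec.dim_mono, rule order.trans[OF fV vec.span_superset])
  then have "vec.dim (f ` {..<Suc N}) \<le> N" unfolding N_def .
  moreover have "card {..<Suc N} = Suc N" by (rule card_lessThan)
  ultimately have "card {..<Suc N} > vec.dim (f ` {..<Suc N})" by linarith
  from nontrivial_relation_if_card_gt_dim[OF finite_lessThan this] obtain c j0 where
    c: "(\<Sum>i\<in>{..<Suc N}. c i *s f i) = 0" "j0 \<in> {..<Suc N}" "c j0 \<noteq> 0" by blast
  define j where "j = j0"
  have cj: "j < Suc N" "c j \<noteq> 0" using c(2,3) by (auto simp: j_def)
  define p where "p = (\<Sum>i<Suc N. monom (c i) i)"
  have cp: "coeff p i = (if i < Suc N then c i else 0)" for i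
    unfolding p_def coeff_sum coeff_monom by (simp del: sum.lessThan_Suc add: sum.delta)
  have dp: "degree p < Suc N"
  proof -
    have "degree p \<le> N" by (rule degree_le) (auto simp: cp)
    then show ?thesis by simp
  qed
  have "poly_act A p z0 = (\<Sum>i<Suc N. coeff p i *s mat_pow_act A i z0)" by (rule poly_act_bound[OF dp])
  also have "\<dots> = (\<Sum>i<Suc N. c i *s f i)" by (rule sum.cong) (simp_all del: sum.lessThan_Suc add: cp f_def)
  finally have "poly_act A p z0 = 0" using c(1) by simp
  moreover have "p \<noteq> 0" using cp[of j] cj by auto
  ultimately show ?thesis by blast
qed

lemma eigvec_modulo_subspace_of_poly:
  assumes V: "vec.subspace V" "\<And>z. z \<in> V \<Longrightarrow> cmat A *v z \<in> V" and W: "vec.subspace W"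
  shows "p \<noteq> 0 \<Longrightarrow> z \<in> V \<Longrightarrow> z \<notin> W \<Longrightarrow> poly_act A p z \<in> W \<Longrightarrow> \<exists>z' r. z' \<in> V \<and> z' \<notin> W \<and> eig_shift A r z' \<in> W"
proof (induction "degree p" arbitrary: p z rule: less_induct)
  case less
  show ?case
  proof (cases "degree p = 0")
    case True
    then obtain c where pc: "p = [:c:]" by (metis degree_eq_zeroE)
    then have c0: "c \<noteq> 0" using less.prems(1) by simp
    have "c *s z \<in> W" using less.prems(4) pc poly_act_const by metis
    then have "(1/c) *s (c *s z) \<in> W" using W by (rule vec.subspace_scale[rotated])
    moreover have "(1/c) *s (c *s z) = z" using c0 by (simp add: vector_smult_assoc)
    ultimately have "z \<in> W" by simp
    with less.prems(3) show ?thesis by simp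
  next
    case False
    then have "\<not> constant (poly p)" by (simp add: constant_degree)
    then obtain r where "poly p r = 0" using fundamental_theorem_of_algebra by blast
    then have "[:-r, 1:] dvd p" by (simp add: poly_eq_0_iff_dvd)
    then obtain q where pq: "p = [:-r, 1:] * q" by (rule dvdE)
    have q0: "q \<noteq> 0" using pq less.prems(1) by auto
    have "degree p = degree [:-r, 1:] + degree q" unfolding pq by (rule degree_mult_eq) (use q0 in auto)
    then have dq: "degree q < degree p" by simp
    have "poly_act A p z = poly_act A q (eig_shift A r z)"
    proof -
      have "poly_act A p z = poly_act A (q * [:-r, 1:]) z" unfolding pq by (simp only: mult.commute)
      also have "\<dots> = poly_act A q (eig_shift A r z)" by (simp only: poly_act_mult poly_act_linear)
      finally show ?thesis .
    qed
    show ?thesis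
    proof (cases "eig_shift A r z \<in> W")
      case True
      then show ?thesis using less.prems(2,3) by blast
    next
      case False
      have "eig_shift A r z \<in> V" unfolding eig_shift_def
        using V less.prems(2) by (simp add: vec.subspace_diff vec.subspace_scale)
      then show ?thesis
        using less.hyps[OF dq q0 _ False] less.prems(4) \<open>poly_act A p z = poly_act A q (eig_shift A r z)\<close> by simp
    qed
  qed
qed

lemma eigvec_modulo_subspace:
  assumes V: "vec.subspace V" "\<And>z. z \<in> V \<Longrightarrow> cmat A *v z \<in> V" and W: "vec.subspace W"
    and z0: "z0 \<in> V" "z0 \<notin> W"
  shows "\<exists>z r. z \<in> V \<and> z \<notin> W \<and> eig_shift A r z \<in> W"
proof -
  obtain p where p: "p \<noteq> 0" "poly_act A p z0 = 0" using annihilating_poly_exists[OF V z0(1)] by blast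
  have "poly_act A p z0 \<in> W" using p(2) W by (simp add: vec.subspace_0)
  from eigvec_modulo_subspace_of_poly[OF V W p(1) z0 this] show ?thesis by blast
qed

definition jordan_family :: "nat^'n^'n \<Rightarrow> (complex^'n) set \<Rightarrow> nat \<Rightarrow> (nat \<Rightarrow> complex) \<Rightarrow> (nat \<Rightarrow> nat) \<Rightarrow> (nat \<Rightarrow> nat \<Rightarrow> complex^'n) \<Rightarrow> bool" where
  "jordan_family A S m lam k x \<longleftrightarrow> (\<forall>i<m. jordan_chain A (lam i) (k i) (x i)) \<and> chain_vecs m k x \<subseteq> S \<and> chains_indep m k x"

lemma chain_subset_chain_vecs: "i < m \<Longrightarrow> x i ` {..<k i} \<subseteq> chain_vecs m k x"
  by (auto simp: chain_vecs_def)

lemma chain_vec_in_shift_image: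
  assumes "jordan_chain A mu k x" "mu \<noteq> r"
  shows "t < k \<Longrightarrow> \<exists>w'\<in>vec.span (x ` {..<k}). eig_shift A r w' = x t"
proof (induction t)
  case 0
  have "eig_shift A r (x 0) = (mu - r) *s x 0" using eig_shift_change[of A r "x 0" mu] jordan_chain_eigvec[OF assms(1)] by simp
  then have "eig_shift A r ((1 / (mu - r)) *s x 0) = ((1 / (mu - r)) * (mu - r)) *s x 0"
    by (simp only: eig_shift_scale vector_smult_assoc)
  then have "eig_shift A r ((1 / (mu - r)) *s x 0) = x 0" using assms(2) by simp
  moreover have "(1 / (mu - r)) *s x 0 \<in> vec.span (x ` {..<k})"
    using 0 by (intro vec.span_scale vec.span_base) auto
  ultimately show ?case by blast
next
  case (Suc s)
  then obtain w'' where w'': "w'' \<in> vec.span (x ` {..<k})" "eig_shift A r w'' = x s" by auto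
  have "eig_shift A r (x (Suc s)) = x s + (mu - r) *s x (Suc s)"
    using eig_shift_change[of A r "x (Suc s)" mu] jordan_chain_step[OF assms(1) Suc.prems] by simp
  then have "eig_shift A r (x (Suc s) - w'') = (mu - r) *s x (Suc s)" using w''(2) by (simp add: eig_shift_diff)
  then have "eig_shift A r ((1 / (mu - r)) *s (x (Suc s) - w'')) = ((1 / (mu - r)) * (mu - r)) *s x (Suc s)"
    by (simp only: eig_shift_scale vector_smult_assoc)
  then have "eig_shift A r ((1 / (mu - r)) *s (x (Suc s) - w'')) = x (Suc s)"
    using assms(2) by simp
  moreover have "(1 / (mu - r)) *s (x (Suc s) - w'') \<in> vec.span (x ` {..<k})"
    using Suc.prems w''(1) by (intro vec.span_scale vec.span_diff[OF vec.span_base]) auto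
  ultimately show ?case by blast
qed

lemma subspace_shift_image_plus_tops:
  assumes "\<forall>i<m. jordan_chain A (lam i) (k i) (x i)"
  shows "vec.subspace {w. \<exists>w'\<in>vec.span (chain_vecs m k x). \<exists>d. (\<forall>i<m. lam i \<noteq> r \<longrightarrow> d i = 0) \<and>
      w = eig_shift A r w' + (\<Sum>i<m. d i *s x i (k i - 1))}"
  unfolding vec.subspace_def
proof (intro conjI ballI allI)
  show "0 \<in> {w. \<exists>w'\<in>vec.span (chain_vecs m k x). \<exists>d. (\<forall>i<m. lam i \<noteq> r \<longrightarrow> d i = 0) \<and>
      w = eig_shift A r w' + (\<Sum>i<m. d i *s x i (k i - 1))}"
    by (intro CollectI bexI[of _ 0] exI[of _ "\<lambda>_. 0"]) (auto intro: vec.span_zero)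
next
  fix c w assume "w \<in> {w. \<exists>w'\<in>vec.span (chain_vecs m k x). \<exists>d. (\<forall>i<m. lam i \<noteq> r \<longrightarrow> d i = 0) \<and>
      w = eig_shift A r w' + (\<Sum>i<m. d i *s x i (k i - 1))}"
  then obtain w' d where h: "w' \<in> vec.span (chain_vecs m k x)" "\<forall>i<m. lam i \<noteq> r \<longrightarrow> d i = 0"
    "w = eig_shift A r w' + (\<Sum>i<m. d i *s x i (k i - 1))" by blast
  show "c *s w \<in> {w. \<exists>w'\<in>vec.span (chain_vecs m k x). \<exists>d. (\<forall>i<m. lam i \<noteq> r \<longrightarrow> d i = 0) \<and>
      w = eig_shift A r w' + (\<Sum>i<m. d i *s x i (k i - 1))}"
    by (intro CollectI bexI[of _ "c *s w'"] exI[of _ "\<lambda>i. c * d i"])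
       (use h in \<open>auto simp: eig_shift_scale vec.scale_right_distrib vec.scale_sum_right vector_smult_assoc intro: vec.span_scale\<close>)
next
  fix w1 w2 assume "w1 \<in> {w. \<exists>w'\<in>vec.span (chain_vecs m k x). \<exists>d. (\<forall>i<m. lam i \<noteq> r \<longrightarrow> d i = 0) \<and>
      w = eig_shift A r w' + (\<Sum>i<m. d i *s x i (k i - 1))}"
    "w2 \<in> {w. \<exists>w'\<in>vec.span (chain_vecs m k x). \<exists>d. (\<forall>i<m. lam i \<noteq> r \<longrightarrow> d i = 0) \<and>
      w = eig_shift A r w' + (\<Sum>i<m. d i *s x i (k i - 1))}"
  then obtain w1' d1 w2' d2 where h: "w1' \<in> vec.span (chain_vecs m k x)" "\<forall>i<m. lam i \<noteq> r \<longrightarrow> d1 i = 0"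
    "w1 = eig_shift A r w1' + (\<Sum>i<m. d1 i *s x i (k i - 1))" "w2' \<in> vec.span (chain_vecs m k x)" "\<forall>i<m. lam i \<noteq> r \<longrightarrow> d2 i = 0"
    "w2 = eig_shift A r w2' + (\<Sum>i<m. d2 i *s x i (k i - 1))" by blast
  show "w1 + w2 \<in> {w. \<exists>w'\<in>vec.span (chain_vecs m k x). \<exists>d. (\<forall>i<m. lam i \<noteq> r \<longrightarrow> d i = 0) \<and>
      w = eig_shift A r w' + (\<Sum>i<m. d i *s x i (k i - 1))}"
    by (intro CollectI bexI[of _ "w1' + w2'"] exI[of _ "\<lambda>i. d1 i + d2 i"])
       (use h in \<open>auto simp: eig_shift_add vector_sadd_rdistrib sum.distrib intro: vec.span_add\<close>)
qed

lemma span_mod_shift_image: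
  assumes ch: "\<forall>i<m. jordan_chain A (lam i) (k i) (x i)" and w: "w \<in> vec.span (chain_vecs m k x)"
  shows "\<exists>w'\<in>vec.span (chain_vecs m k x). \<exists>d. (\<forall>i<m. lam i \<noteq> r \<longrightarrow> d i = 0) \<and>
      w = eig_shift A r w' + (\<Sum>i<m. d i *s x i (k i - 1))"
  using vec.span_induct[OF w subspace_shift_image_plus_tops[OF ch, of r]]
proof -
  have "\<And>g. g \<in> chain_vecs m k x \<Longrightarrow> \<exists>w'\<in>vec.span (chain_vecs m k x). \<exists>d. (\<forall>i<m. lam i \<noteq> r \<longrightarrow> d i = 0) \<and>
      g = eig_shift A r w' + (\<Sum>i<m. d i *s x i (k i - 1))"
  proof -
    fix g assume "g \<in> chain_vecs m k x"
    then obtain i t where it: "i < m" "t < k i" "g = x i t" by (auto simp: chain_vecs_def)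
    have chi: "jordan_chain A (lam i) (k i) (x i)" using ch it by auto
    show "\<exists>w'\<in>vec.span (chain_vecs m k x). \<exists>d. (\<forall>i<m. lam i \<noteq> r \<longrightarrow> d i = 0) \<and>
      g = eig_shift A r w' + (\<Sum>i<m. d i *s x i (k i - 1))"
    proof (cases "lam i = r")
      case False
      obtain w' where "w' \<in> vec.span (x i ` {..<k i})" "eig_shift A r w' = x i t"
        using chain_vec_in_shift_image[OF chi False it(2)] by blast
      then show ?thesis using vec.span_mono[OF chain_subset_chain_vecs[OF it(1)]] it(3)
        by (intro bexI[of _ w'] exI[of _ "\<lambda>_. 0"]) auto
    next
      case True
      show ?thesis
      proof (cases "Suc t < k i")
        case True
        have "x i (Suc t) \<in> vec.span (chain_vecs m k x)"
          using it(1) True by (auto intro!: vec.span_base simp: chain_vecs_def)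
        then show ?thesis using jordan_chain_step[OF chi True] \<open>lam i = r\<close> it(3)
          by (intro bexI[of _ "x i (Suc t)"] exI[of _ "\<lambda>_. 0"]) auto
      next
        case False
        then have tk: "t = k i - 1" using it(2) by simp
        have "(\<Sum>j<m. (if j = i then 1 else 0) *s x j (k j - 1)) = x i (k i - 1)"
          using it(1) by (simp add: if_scale sum.delta)
        then show ?thesis using \<open>lam i = r\<close> it(3) tk
          by (intro bexI[of _ 0] exI[of _ "\<lambda>j. if j = i then 1 else 0"]) (auto intro: vec.span_zero)
      qed
    qed
  qed
  then show ?thesis using vec.span_induct[OF w subspace_shift_image_plus_tops[OF ch, of r]] by blast
qed

lemma chain_vecs_mem: "i < m \<Longrightarrow> t < k i \<Longrightarrow> x i t \<in> chain_vecs m k x"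
  by (auto simp: chain_vecs_def)

lemma jordan_family_of_span_insert:
  assumes fam: "jordan_family A S m lam k x" and S: "vec.subspace S"
    and z: "z \<in> S" "z \<notin> vec.span (chain_vecs m k x)"
    and ch': "\<forall>i<m'. jordan_chain A (lam' i) (k' i) (x' i)"
    and span': "vec.span (chain_vecs m' k' x') = vec.span (insert z (chain_vecs m k x))"
    and count: "(\<Sum>i<m'. k' i) = Suc (\<Sum>i<m. k i)"
  shows "jordan_family A S m' lam' k' x'"
proof -
  have sub: "chain_vecs m k x \<subseteq> S" and ind: "chains_indep m k x"
    using fam by (auto simp: jordan_family_def)
  have dim: "vec.dim (vec.span (insert z (chain_vecs m k x))) = Suc (\<Sum>i<m. k i)"
    using vec.dim_insert[of z "chain_vecs m k x"] z(2) dim_chain_vecs[OF ind] by (simp add: vec.dim_span)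
  have "vec.dim (chain_vecs m' k' x') = Suc (\<Sum>i<m. k i)"
    using dim span' by (metis vec.dim_span)
  then have "chains_indep m' k' x'"
    by (intro chains_indep_if_spanning[of _ _ _ "vec.span (chain_vecs m' k' x')"])
       (simp_all add: vec.span_superset count vec.dim_span)
  moreover have "chain_vecs m' k' x' \<subseteq> S"
    using vec.span_superset[of "chain_vecs m' k' x'"] vec.span_minimal[of "insert z (chain_vecs m k x)" S]
      sub z(1) S unfolding span' by blast
  ultimately show ?thesis using ch' unfolding jordan_family_def by blast
qed

lemma jordan_family_add_chain:
  assumes fam: "jordan_family A S m lam k x" and S: "vec.subspace S"
    and z: "z \<in> S" "z \<notin> vec.span (chain_vecs m k x)" and eig: "eig_shift A r z = 0"
  shows "jordan_family A S (Suc m) (lam(m := r)) (k(m := 1)) (x(m := (\<lambda>_. z)))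
         \<and> (\<Sum>i<Suc m. (k(m := 1)) i) = Suc (\<Sum>i<m. k i)"
proof -
  have "z \<noteq> 0" using z(2) vec.span_zero by auto
  then have "jordan_chain A r 1 (\<lambda>_. z)" by (intro jordan_chainI) (use eig in auto)
  then have ch': "\<forall>i<Suc m. jordan_chain A ((lam(m := r)) i) ((k(m := 1)) i) ((x(m := (\<lambda>_. z))) i)"
    using fam by (auto simp: less_Suc_eq jordan_family_def)
  have count: "(\<Sum>i<Suc m. (k(m := 1)) i) = Suc (\<Sum>i<m. k i)"
    by (simp add: sum.cong[of "{..<m}" "{..<m}" "k(m := 1)" k])
  have "chain_vecs (Suc m) (k(m := 1)) (x(m := (\<lambda>_. z))) = insert z (chain_vecs m k x)"
    by (auto simp: chain_vecs_def less_Suc_eq)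
  then have "vec.span (chain_vecs (Suc m) (k(m := 1)) (x(m := (\<lambda>_. z))))
      = vec.span (insert z (chain_vecs m k x))" by simp
  from conjI[OF jordan_family_of_span_insert[OF fam S z ch' this count] count] show ?thesis .
qed

text \<open>To lengthen a chain we use the vectors of chain \<open>i\<close> shifted so that its top vector
  sits at height \<open>K - 1\<close> (padded with zeros below).\<close>

definition top_aligned :: "nat \<Rightarrow> (nat \<Rightarrow> nat) \<Rightarrow> (nat \<Rightarrow> nat \<Rightarrow> complex^'n) \<Rightarrow> nat \<Rightarrow> nat \<Rightarrow> complex^'n" where
  "top_aligned K k x i j = (if K \<le> j + k i then x i (j + k i - K) else 0)"

definition lifted_chain ::
    "nat \<Rightarrow> (nat \<Rightarrow> nat) \<Rightarrow> (nat \<Rightarrow> nat \<Rightarrow> complex^'n) \<Rightarrow> (nat \<Rightarrow> complex) \<Rightarrow> nat \<Rightarrow> complex^'n \<Rightarrow> nat \<Rightarrow> complex^'n" where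
  "lifted_chain m k x d K z j = (if j = K then z else (\<Sum>i<m. d i *s top_aligned K k x i j))"

lemma eig_shift_top_aligned:
  assumes ch: "jordan_chain A r (k i) (x i)" and kK: "k i \<le> K"
  shows "eig_shift A r (top_aligned K k x i 0) = 0"
    and "Suc t < K \<Longrightarrow> eig_shift A r (top_aligned K k x i (Suc t)) = top_aligned K k x i t"
proof -
  show "eig_shift A r (top_aligned K k x i 0) = 0"
    using kK jordan_chain_eigvec[OF ch] by (cases "K \<le> k i") (auto simp: top_aligned_def)
  assume t: "Suc t < K"
  show "eig_shift A r (top_aligned K k x i (Suc t)) = top_aligned K k x i t"
  proof (cases "K \<le> Suc t + k i")
    case True
    then have "Suc t + k i - K < k i" using t by simp
    from jordan_chain_shift[OF ch this] True show ?thesis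
      by (auto simp: top_aligned_def Suc_diff_le)
  qed (simp add: top_aligned_def)
qed

lemma lifted_chain_recursion:
  assumes ch: "\<forall>i<m. jordan_chain A (lam i) (k i) (x i)" and K: "K \<ge> 1"
    and d: "\<And>i. i < m \<Longrightarrow> d i \<noteq> 0 \<Longrightarrow> lam i = r \<and> k i \<le> K"
    and eig: "eig_shift A r z = (\<Sum>i<m. d i *s x i (k i - 1))"
  shows "eig_shift A r (lifted_chain m k x d K z 0) = 0"
    and "Suc t < Suc K \<Longrightarrow> eig_shift A r (lifted_chain m k x d K z (Suc t)) = lifted_chain m k x d K z t"
proof -
  have aligned: "jordan_chain A r (k i) (x i) \<and> k i \<le> K" if "i < m" "d i \<noteq> 0" for i
    using ch d that by auto
  have top: "d i *s eig_shift A r (top_aligned K k x i 0) = 0" if "i < m" for i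
  proof (cases "d i = 0")
    case False
    then have "jordan_chain A r (k i) (x i)" "k i \<le> K" using aligned[OF that] by auto
    from eig_shift_top_aligned(1)[where k=k and x=x, OF this] show ?thesis by simp
  qed simp
  have "(\<Sum>i<m. d i *s eig_shift A r (top_aligned K k x i 0)) = 0"
    using top by (intro sum.neutral) auto
  then show "eig_shift A r (lifted_chain m k x d K z 0) = 0"
    using K by (simp add: lifted_chain_def eig_shift_sum eig_shift_scale)
  assume t: "Suc t < Suc K"
  show "eig_shift A r (lifted_chain m k x d K z (Suc t)) = lifted_chain m k x d K z t"
  proof (cases "Suc t = K")
    case True
    have "d i *s top_aligned K k x i t = d i *s x i (k i - 1)" if "i < m" for i
    proof (cases "d i = 0")
      case False
      then have "1 \<le> k i" using aligned[OF that] jordan_chain_length_pos by blast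
      moreover have "t + k i - K = k i - 1" using True by simp
      ultimately show ?thesis using True by (simp add: top_aligned_def)
    qed simp
    then have "(\<Sum>i<m. d i *s top_aligned K k x i t) = (\<Sum>i<m. d i *s x i (k i - 1))"
      by (intro sum.cong) auto
    then show ?thesis using True eig by (simp add: lifted_chain_def)
  next
    case False
    then have tK: "Suc t < K" using t by simp
    have "d i *s eig_shift A r (top_aligned K k x i (Suc t)) = d i *s top_aligned K k x i t" if "i < m" for i
    proof (cases "d i = 0")
      case False
      then have "jordan_chain A r (k i) (x i)" "k i \<le> K" using aligned[OF that] by auto
      from eig_shift_top_aligned(2)[where k=k and x=x, OF this tK] show ?thesis by simp
    qed simp
    then have "(\<Sum>i<m. d i *s eig_shift A r (top_aligned K k x i (Suc t))) = (\<Sum>i<m. d i *s top_aligned K k x i t)"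
      by (intro sum.cong) auto
    then show ?thesis
      using tK by (simp add: lifted_chain_def eig_shift_sum eig_shift_scale)
  qed
qed

lemma lifted_chain_nonzero:
  assumes ind: "chains_indep m k x" and i0: "i0 < m" "d i0 \<noteq> 0" "K = k i0"
    and z: "z \<noteq> 0" and j: "j < Suc K"
  shows "lifted_chain m k x d K z j \<noteq> 0"
proof (cases "j = K")
  case False
  then have jK: "j < k i0" using j i0(3) by simp
  define c where "c = (\<lambda>i t. if K \<le> j + k i \<and> t = j + k i - K then d i else (0::complex))"
  have "d i *s top_aligned K k x i j = (\<Sum>t<k i. c i t *s x i t)" for i
  proof (cases "K \<le> j + k i")
    case True
    then have "j + k i - K < k i" using jK i0(3) by simp
    then show ?thesis using True by (simp add: c_def top_aligned_def if_scale)
  qed (simp add: c_def top_aligned_def)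
  then have "lifted_chain m k x d K z j = (\<Sum>i<m. \<Sum>t<k i. c i t *s x i t)"
    using False by (simp add: lifted_chain_def)
  moreover have "c i0 j \<noteq> 0" using i0 by (simp add: c_def)
  ultimately show ?thesis
    using ind[unfolded chains_indep_def, rule_format, of c] i0(1) jK by auto
qed (simp add: lifted_chain_def z)

lemma top_aligned_in_span:
  assumes "i < m" "j < K"
  shows "top_aligned K k x i j \<in> vec.span (chain_vecs m k x)"
  using assms by (auto simp: top_aligned_def vec.span_zero intro!: vec.span_base chain_vecs_mem)

lemma span_chain_vecs_lifted:
  fixes x :: "nat \<Rightarrow> nat \<Rightarrow> complex^'n" and z :: "complex^'n"
  assumes i0: "i0 < m" "d i0 \<noteq> 0" and K: "K = k i0"
  defines "x' \<equiv> x(i0 := lifted_chain m k x d K z)" and "k' \<equiv> k(i0 := Suc K)"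
  shows "vec.span (chain_vecs m k' x') = vec.span (insert z (chain_vecs m k x))"
proof (rule vec.span_eq[THEN iffD2, OF conjI])
  have old: "vec.span (chain_vecs m k x) \<subseteq> vec.span (insert z (chain_vecs m k x))"
    by (rule vec.span_mono) auto
  have lifted: "lifted_chain m k x d K z t \<in> vec.span (insert z (chain_vecs m k x))" if "t < Suc K" for t
  proof (cases "t = K")
    case False
    then have "(\<Sum>i<m. d i *s top_aligned K k x i t) \<in> vec.span (chain_vecs m k x)"
      using that by (intro vec.span_sum vec.span_scale top_aligned_in_span) auto
    then show ?thesis using False old by (auto simp: lifted_chain_def)
  qed (simp add: lifted_chain_def vec.span_base)
  show "chain_vecs m k' x' \<subseteq> vec.span (insert z (chain_vecs m k x))"
  proof
    fix v assume "v \<in> chain_vecs m k' x'"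
    then obtain i t where it: "i < m" "t < k' i" "v = x' i t" by (auto simp: chain_vecs_def)
    show "v \<in> vec.span (insert z (chain_vecs m k x))"
    proof (cases "i = i0")
      case True
      then show ?thesis using it lifted by (simp add: x'_def k'_def)
    next
      case False
      then have "v \<in> chain_vecs m k x" using it by (auto simp: x'_def k'_def chain_vecs_def)
      then show ?thesis by (simp add: vec.span_base)
    qed
  qed
next
  have mem': "x' i t \<in> vec.span (chain_vecs m k' x')" if "i < m" "t < k' i" for i t
    using that by (intro vec.span_base chain_vecs_mem)
  have other: "top_aligned K k x i t \<in> vec.span (chain_vecs m k' x')" if "i < m" "i \<noteq> i0" "t < K" for i t
    using mem'[of i "t + k i - K"] that by (auto simp: top_aligned_def x'_def k'_def vec.span_zero)
  have "x i0 t \<in> vec.span (chain_vecs m k' x')" if "t < K" for t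
  proof -
    have "x' i0 t = d i0 *s x i0 t + (\<Sum>i\<in>{..<m} - {i0}. d i *s top_aligned K k x i t)"
      using that i0(1) by (simp add: x'_def lifted_chain_def sum.remove[of "{..<m}" i0] top_aligned_def K)
    then have e: "x i0 t = (1 / d i0) *s (x' i0 t - (\<Sum>i\<in>{..<m} - {i0}. d i *s top_aligned K k x i t))"
      using i0(2) by (simp add: vector_smult_assoc)
    have "x' i0 t \<in> vec.span (chain_vecs m k' x')" using mem'[OF i0(1), of t] that by (simp add: k'_def)
    then show ?thesis unfolding e
      using other that by (intro vec.span_scale vec.span_diff vec.span_sum vec.span_scale) auto
  qed
  moreover have "z \<in> vec.span (chain_vecs m k' x')"
    using mem'[OF i0(1), of K] by (simp add: x'_def k'_def lifted_chain_def)
  moreover have "x i t \<in> vec.span (chain_vecs m k' x')" if "i < m" "i \<noteq> i0" "t < k i" for i t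
    using mem'[of i t] that by (simp add: x'_def k'_def)
  ultimately show "insert z (chain_vecs m k x) \<subseteq> vec.span (chain_vecs m k' x')"
    using K by (auto simp: chain_vecs_def)
qed

lemma jordan_family_extend_chain:
  assumes fam: "jordan_family A S m lam k x" and S: "vec.subspace S"
    and z: "z \<in> S" "z \<notin> vec.span (chain_vecs m k x)"
    and i0: "i0 < m" "d i0 \<noteq> 0"
    and d: "\<And>i. i < m \<Longrightarrow> d i \<noteq> 0 \<Longrightarrow> lam i = r \<and> k i \<le> k i0"
    and eig: "eig_shift A r z = (\<Sum>i<m. d i *s x i (k i - 1))"
  shows "\<exists>x'. jordan_family A S m lam (k(i0 := Suc (k i0))) x'
         \<and> (\<Sum>i<m. (k(i0 := Suc (k i0))) i) = Suc (\<Sum>i<m. k i)"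
proof -
  define K where "K = k i0"
  define y where "y = lifted_chain m k x d K z"
  have ch: "\<forall>i<m. jordan_chain A (lam i) (k i) (x i)" and ind: "chains_indep m k x"
    using fam by (auto simp: jordan_family_def)
  have K1: "K \<ge> 1" using ch i0(1) jordan_chain_length_pos K_def by blast
  have "z \<noteq> 0" using z(2) vec.span_zero by auto
  then have "jordan_chain A r (Suc K) y"
    using lifted_chain_nonzero[where m=m and k=k and x=x and d=d and K=K and z=z, OF ind i0 K_def] lifted_chain_recursion[OF ch K1 d[folded K_def] eig]
    by (intro jordan_chainI) (auto simp: y_def)
  moreover have "lam i0 = r" using d[OF i0] by simp
  ultimately have ch': "\<forall>i<m. jordan_chain A (lam i) ((k(i0 := Suc K)) i) ((x(i0 := y)) i)"
    using ch by auto
  have count: "(\<Sum>i<m. (k(i0 := Suc K)) i) = Suc (\<Sum>i<m. k i)"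
    using i0(1) by (simp add: sum.remove[of "{..<m}" i0] K_def)
  have "vec.span (chain_vecs m (k(i0 := Suc K)) (x(i0 := y))) = vec.span (insert z (chain_vecs m k x))"
    unfolding y_def by (rule span_chain_vecs_lifted[where d=d and k=k, OF i0 K_def])
  from jordan_family_of_span_insert[OF fam S z ch' this count]
  show ?thesis unfolding K_def[symmetric] using count by (intro exI[of _ "x(i0 := y)"] conjI)
qed

text \<open>Take \<open>z \<notin> W\<close> with \<open>(A - r) z \<in> W\<close>, i.e. an eigenvector of \<open>A\<close> on \<open>S / W\<close>. Modulo
  \<open>(A - r) W\<close>, the vector \<open>(A - r) z\<close> is a combination of the tops of the chains with eigenvalue
  \<open>r\<close>; after subtracting a preimage, \<open>z\<close> either starts a new chain or extends the longest chain
  occurring in that combination.\<close>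

lemma jordan_family_grow:
  assumes F: "jordan_family A S m lam k x" and S: "vec.subspace S"
    and inv: "\<And>z. z \<in> S \<Longrightarrow> cmat A *v z \<in> S"
    and z0: "z0 \<in> S" "z0 \<notin> vec.span (chain_vecs m k x)"
  shows "\<exists>m' lam' k' x'. jordan_family A S m' lam' k' x' \<and> (\<Sum>i<m'. k' i) = Suc (\<Sum>i<m. k i)"
proof -
  define W where "W = vec.span (chain_vecs m k x)"
  have ch: "\<forall>i<m. jordan_chain A (lam i) (k i) (x i)" and "chain_vecs m k x \<subseteq> S"
    using F by (auto simp: jordan_family_def)
  then have WS: "W \<subseteq> S" unfolding W_def by (intro vec.span_minimal S)
  obtain z r where zr: "z \<in> S" "z \<notin> W" "eig_shift A r z \<in> W"
    using eigvec_modulo_subspace[OF S inv _ z0] unfolding W_def by blast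
  obtain w d where wd: "w \<in> W" "\<forall>i<m. lam i \<noteq> r \<longrightarrow> d i = 0"
      "eig_shift A r z = eig_shift A r w + (\<Sum>i<m. d i *s x i (k i - 1))"
    using span_mod_shift_image[OF ch zr(3)[unfolded W_def]] unfolding W_def by blast
  define z' where "z' = z - w"
  have eig: "eig_shift A r z' = (\<Sum>i<m. d i *s x i (k i - 1))"
    using wd(3) by (simp add: z'_def eig_shift_diff)
  have "z' + w \<notin> W" using zr(2) by (simp add: z'_def)
  then have "z' \<notin> W" using wd(1) vec.span_add unfolding W_def by blast
  moreover have "z' \<in> S" using zr(1) wd(1) WS S unfolding z'_def by (auto intro: vec.subspace_diff)
  ultimately have z': "z' \<in> S" "z' \<notin> vec.span (chain_vecs m k x)" unfolding W_def by simp_all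
  show ?thesis
  proof (cases "\<forall>i<m. d i = 0")
    case True
    then have "eig_shift A r z' = 0" using eig by simp
    from jordan_family_add_chain[OF F S z' this] show ?thesis by blast
  next
    case False
    define R where "R = {i. i < m \<and> d i \<noteq> 0}"
    have finR: "finite (k ` R)" and neR: "k ` R \<noteq> {}" using False by (auto simp: R_def)
    obtain i0 where i0: "i0 \<in> R" "k i0 = Max (k ` R)" using Max_in[OF finR neR] by auto
    have d: "\<And>i. i < m \<Longrightarrow> d i \<noteq> 0 \<Longrightarrow> lam i = r \<and> k i \<le> k i0"
      using wd(2) Max_ge[OF finR] i0(2) by (auto simp: R_def)
    have "i0 < m" "d i0 \<noteq> 0" using i0(1) by (auto simp: R_def)
    from jordan_family_extend_chain[OF F S z' this d eig] show ?thesis by blast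
  qed
qed

lemma jordan_family_spanning_exists:
  assumes syn: "synchrony_subspace A S"
  shows "\<exists>m lam k x. jordan_family A S m lam k x \<and> vec.span (chain_vecs m k x) = S"
proof -
  have inv: "\<And>z. z \<in> S \<Longrightarrow> cmat A *v z \<in> S" and S: "vec.subspace S"
    using syn polydiagonal_subspace by (auto simp: synchrony_subspace_def)
  define P where "P = (\<lambda>N. \<exists>m lam k x. jordan_family A S m lam k x \<and> (\<Sum>i<m. k i) = N)"
  have P0: "P 0"
    unfolding P_def jordan_family_def chains_indep_def chain_vecs_def by (rule exI[of _ 0]) auto
  have bound: "\<forall>N. P N \<longrightarrow> N < Suc (vec.dim S)"
  proof (intro allI impI)
    fix N assume "P N"
    obtain m lam k x where f: "jordan_family A S m lam k x" "(\<Sum>i<m. k i) = N"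
      using \<open>P N\<close> unfolding P_def by blast
    then have "vec.dim (chain_vecs m k x) = N" using dim_chain_vecs by (auto simp: jordan_family_def)
    moreover have "vec.dim (chain_vecs m k x) \<le> vec.dim S"
      using f(1) vec.span_superset by (intro vec.dim_mono) (auto simp: jordan_family_def)
    ultimately show "N < Suc (vec.dim S)" by simp
  qed
  obtain N where N: "P N" "\<And>N'. P N' \<Longrightarrow> N' \<le> N"
    using ex_has_greatest_nat[of P 0 "\<lambda>N. N" "Suc (vec.dim S)", OF P0 bound] by auto
  then obtain m lam k x where F: "jordan_family A S m lam k x" "(\<Sum>i<m. k i) = N"
    unfolding P_def by blast
  have "vec.span (chain_vecs m k x) \<subseteq> S"
    using F(1) by (intro vec.span_minimal S) (simp add: jordan_family_def)
  moreover have "S \<subseteq> vec.span (chain_vecs m k x)"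
  proof
    fix z0 assume "z0 \<in> S"
    show "z0 \<in> vec.span (chain_vecs m k x)"
    proof (rule ccontr)
      assume "z0 \<notin> vec.span (chain_vecs m k x)"
      from jordan_family_grow[OF F(1) S inv \<open>z0 \<in> S\<close> this] have "P (Suc N)"
        unfolding P_def F(2) by blast
      with N(2) show False by fastforce
    qed
  qed
  ultimately show ?thesis using F(1) by blast
qed

definition chain_vecs_below :: "nat \<Rightarrow> (nat \<Rightarrow> nat) \<Rightarrow> (nat \<Rightarrow> nat \<Rightarrow> complex^'n) \<Rightarrow> nat \<Rightarrow> nat \<Rightarrow> (complex^'n) set" where
  "chain_vecs_below m k x i1 s = {x i1 t | t. t < s} \<union> {x i t | i t. i < m \<and> i \<noteq> i1 \<and> t < k i}"

lemma chain_vecs_below_mono: "s \<le> s' \<Longrightarrow> chain_vecs_below m k x i1 s \<subseteq> chain_vecs_below m k x i1 s'"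
  unfolding chain_vecs_below_def by auto

lemma eig_shift_chain_vecs_below:
  assumes ch: "\<forall>i<m. jordan_chain A (lam i) (k i) (x i)" and i1: "i1 < m" and s: "Suc s \<le> k i1"
    and w: "w \<in> vec.span (chain_vecs_below m k x i1 (Suc s))"
  shows "eig_shift A (lam i1) w \<in> vec.span (chain_vecs_below m k x i1 s)"
proof (rule eig_shift_span[OF _ w])
  fix g assume "g \<in> chain_vecs_below m k x i1 (Suc s)"
  then consider t where "t < Suc s" "g = x i1 t" | i t where "i < m" "i \<noteq> i1" "t < k i" "g = x i t"
    unfolding chain_vecs_below_def by blast
  then show "eig_shift A (lam i1) g \<in> vec.span (chain_vecs_below m k x i1 s)"
  proof cases
    case (1 t)
    have "t < k i1" using 1 s by simp
    then have "eig_shift A (lam i1) g = (if t = 0 then 0 else x i1 (t - 1))"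
      using jordan_chain_shift[of A "lam i1" "k i1" "x i1" t] ch i1 1 by simp
    moreover have "t \<noteq> 0 \<Longrightarrow> x i1 (t - 1) \<in> chain_vecs_below m k x i1 s" using 1 unfolding chain_vecs_below_def by force
    ultimately show ?thesis by (auto intro: vec.span_base vec.span_zero)
  next
    case (2 i t)
    have "eig_shift A (lam i1) g \<in> vec.span (x i ` {..<k i})"
      using eig_shift_chain_vec[of A "lam i" "k i" "x i" t "lam i1"] ch 2 by simp
    moreover have "x i ` {..<k i} \<subseteq> chain_vecs_below m k x i1 s" using 2 unfolding chain_vecs_below_def by blast
    ultimately show ?thesis using vec.span_mono by blast
  qed
qed

lemma agreement_descends_chain:
  assumes ch: "\<forall>i<m. jordan_chain A (lam i) (k i) (x i)" and i1: "i1 < m"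
    and w: "\<And>s. Suc s < k i1 \<Longrightarrow> eig_shift A (lam i1) (w (Suc s)) = w s"
    and top: "w (k i1 - 1) - g *s x i1 (k i1 - 1) \<in> vec.span (chain_vecs_below m k x i1 (k i1 - 1))"
    and s: "s < k i1"
  shows "w s - g *s x i1 s \<in> vec.span (chain_vecs_below m k x i1 s)"
proof -
  have "s \<le> k i1 - 1" using s by simp
  then show ?thesis
  proof (induction s rule: inc_induct)
    case base
    show ?case by (rule top)
  next
    case (step n)
    then have "Suc n < k i1" by simp
    from eig_shift_chain_vecs_below[OF ch i1 less_imp_le[OF this] step.IH] this show ?case
      using w jordan_chain_step[of A "lam i1" "k i1" "x i1"] ch i1 by (simp add: eig_shift_diff eig_shift_scale)
  qed
qed

lemma chains_indep_independent:
  fixes x :: "nat \<Rightarrow> nat \<Rightarrow> complex^'n"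
  assumes "chains_indep m k x"
  shows "inj_on (\<lambda>(i,t). x i t) (chain_index m k) \<and> vec.independent (chain_vecs m k x)"
proof -
  define g where "g = (\<lambda>(i,t). x i t)"
  have vI: "chain_vecs m k x = g ` chain_index m k" by (simp add: chain_vecs_chain_index g_def)
  have d: "vec.dim (chain_vecs m k x) = card (chain_index m k)" using dim_chain_vecs[OF assms] card_chain_index by simp
  have d1: "vec.dim (chain_vecs m k x) \<le> card (g ` chain_index m k)"
    using vec.dim_le_card[of "chain_vecs m k x" "g ` chain_index m k"] vI by (simp add: vec.span_superset)
  have d2: "card (g ` chain_index m k) \<le> card (chain_index m k)" by (rule card_image_le) simp
  have inj: "inj_on g (chain_index m k)" using d d1 d2 by (intro eq_card_imp_inj_on) auto
  have "vec.independent (g ` chain_index m k)"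
    using vec.card_le_dim_spanning[of "g ` chain_index m k" "chain_vecs m k x"] vI d d1 d2 by (auto simp: vec.span_superset)
  then show ?thesis using inj vI by (simp add: g_def)
qed

lemma chain_vec_notin_span_below:
  assumes ind: "chains_indep m k x" and i1: "i1 < m" and s: "s < k i1"
  shows "x i1 s \<notin> vec.span (chain_vecs_below m k x i1 s)"
proof
  assume a: "x i1 s \<in> vec.span (chain_vecs_below m k x i1 s)"
  have inj: "inj_on (\<lambda>(i,t). x i t) (chain_index m k)" and ind': "vec.independent (chain_vecs m k x)"
    using chains_indep_independent[OF ind] by auto
  have "chain_vecs_below m k x i1 s \<subseteq> chain_vecs m k x - {x i1 s}"
  proof
    fix v assume "v \<in> chain_vecs_below m k x i1 s"
    then consider t where "t < s" "v = x i1 t" | i t where "i < m" "i \<noteq> i1" "t < k i" "v = x i t"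
      unfolding chain_vecs_below_def by blast
    then show "v \<in> chain_vecs m k x - {x i1 s}"
    proof cases
      case (1 t)
      have "(i1, t) \<in> chain_index m k" "(i1, s) \<in> chain_index m k" using 1 i1 s by (auto simp: chain_index_def)
      then have "x i1 t \<noteq> x i1 s" using inj 1 unfolding inj_on_def by fastforce
      moreover have "x i1 t \<in> chain_vecs m k x" by (rule chain_vecs_mem) (use 1 i1 s in auto)
      ultimately show ?thesis using 1 by auto
    next
      case (2 i t)
      have "(i, t) \<in> chain_index m k" "(i1, s) \<in> chain_index m k" using 2 i1 s by (auto simp: chain_index_def)
      then have "x i t \<noteq> x i1 s" using inj 2 unfolding inj_on_def by fastforce
      then show ?thesis using 2 by (auto simp: chain_vecs_def)
    qed
  qed
  then have "x i1 s \<in> vec.span (chain_vecs m k x - {x i1 s})" using a vec.span_mono by blast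
  moreover have "x i1 s \<in> chain_vecs m k x" using i1 s by (rule chain_vecs_mem)
  ultimately show False using ind' unfolding vec.dependent_def by blast
qed

lemma chain_vecs_split_top:
  assumes "i1 < m" "k i1 \<ge> 1"
  shows "chain_vecs m k x = insert (x i1 (k i1 - 1)) (chain_vecs_below m k x i1 (k i1 - 1))"
proof
  show "chain_vecs m k x \<subseteq> insert (x i1 (k i1 - 1)) (chain_vecs_below m k x i1 (k i1 - 1))"
  proof
    fix v assume "v \<in> chain_vecs m k x"
    then obtain i t where it: "i < m" "t < k i" "v = x i t" by (auto simp: chain_vecs_def)
    show "v \<in> insert (x i1 (k i1 - 1)) (chain_vecs_below m k x i1 (k i1 - 1))"
    proof (cases "i = i1")
      case True
      then show ?thesis using it by (cases "t = k i1 - 1") (auto simp: chain_vecs_below_def)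
    next
      case False then show ?thesis using it by (auto simp: chain_vecs_below_def)
    qed
  qed
next
  have "x i1 t \<in> chain_vecs m k x" if "t < k i1" for t using assms(1) that by (rule chain_vecs_mem)
  moreover have "x i t \<in> chain_vecs m k x" if "i < m" "t < k i" for i t using that by (rule chain_vecs_mem)
  ultimately show "insert (x i1 (k i1 - 1)) (chain_vecs_below m k x i1 (k i1 - 1)) \<subseteq> chain_vecs m k x"
    using assms unfolding chain_vecs_below_def by auto
qed

lemma triangular_convolution_solvable:
  fixes X Y :: "nat \<Rightarrow> complex"
  assumes "Y 0 \<noteq> 0"
  shows "\<exists>e. \<forall>s<n. X s = (\<Sum>l\<le>s. e l * Y (s - l))"
proof (induction n)
  case 0 then show ?case by simp
next
  case (Suc n)
  then obtain e where e: "\<forall>s<n. X s = (\<Sum>l\<le>s. e l * Y (s - l))" by blast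
  define e' where "e' = e(n := (X n - (\<Sum>l<n. e l * Y (n - l))) / Y 0)"
  have "\<forall>s<Suc n. X s = (\<Sum>l\<le>s. e' l * Y (s - l))"
  proof (intro allI impI)
    fix s assume "s < Suc n"
    show "X s = (\<Sum>l\<le>s. e' l * Y (s - l))"
    proof (cases "s = n")
      case True
      have "(\<Sum>l\<le>n. e' l * Y (n - l)) = (\<Sum>l<n. e' l * Y (n - l)) + e' n * Y 0"
        by (simp add: lessThan_Suc_atMost[symmetric])
      also have "(\<Sum>l<n. e' l * Y (n - l)) = (\<Sum>l<n. e l * Y (n - l))"
        by (rule sum.cong) (auto simp: e'_def)
      finally show ?thesis using True assms by (simp add: e'_def)
    next
      case False
      then have "s < n" using \<open>s < Suc n\<close> by simp
      have "(\<Sum>l\<le>s. e' l * Y (s - l)) = (\<Sum>l\<le>s. e l * Y (s - l))"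
        by (rule sum.cong) (use \<open>s < n\<close> in \<open>auto simp: e'_def\<close>)
      then show ?thesis using e \<open>s < n\<close> by simp
    qed
  qed
  then show ?case by blast
qed

lemma chain_vec_in_span_exchanged:
  assumes i1: "i1 < m" and g: "g \<noteq> 0"
    and below: "\<And>s. s < k i1 \<Longrightarrow> z s - g *s x i1 s \<in> vec.span (chain_vecs_below m k x i1 s)"
  shows "s < k i1 \<Longrightarrow> x i1 s \<in> vec.span (chain_vecs m k (x(i1 := z)))"
proof (induction s rule: less_induct)
  case (less s)
  let ?V = "vec.span (chain_vecs m k (x(i1 := z)))"
  have "x i t \<in> ?V" if "i < m" "i \<noteq> i1" "t < k i" for i t
    using chain_vecs_mem[of i m t k "x(i1 := z)"] that by (simp add: vec.span_base)
  moreover have "x i1 t \<in> ?V" if "t < s" for t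
    by (rule less.IH) (use that less.prems in auto)
  ultimately have "chain_vecs_below m k x i1 s \<subseteq> ?V"
    unfolding chain_vecs_below_def by blast
  then have "z s - g *s x i1 s \<in> ?V"
    using below[OF less.prems] vec.span_minimal[of _ ?V] by blast
  moreover have "z s \<in> ?V"
    using chain_vecs_mem[of i1 m s k "x(i1 := z)"] i1 less.prems by (simp add: vec.span_base)
  ultimately have "z s - (z s - g *s x i1 s) \<in> ?V" using vec.span_diff by blast
  then have "g *s x i1 s \<in> ?V" by simp
  then have "(1 / g) *s (g *s x i1 s) \<in> ?V" by (rule vec.span_scale)
  with g show ?case by (simp add: vector_smult_assoc fun_upd_def)
qed

lemma jordan_family_exchange:
  assumes F: "jordan_family A S m lam k x" and sp: "vec.span (chain_vecs m k x) = S" and i1: "i1 < m"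
    and z: "jordan_chain A (lam i1) (k i1) z" and zS: "\<And>s. s < k i1 \<Longrightarrow> z s \<in> S"
    and g: "g \<noteq> 0"
    and top: "z (k i1 - 1) - g *s x i1 (k i1 - 1) \<in> vec.span (chain_vecs_below m k x i1 (k i1 - 1))"
  shows "jordan_family A S m lam k (x(i1 := z)) \<and> vec.span (chain_vecs m k (x(i1 := z))) = S"
proof -
  have ch: "\<forall>i<m. jordan_chain A (lam i) (k i) (x i)" and sub: "chain_vecs m k x \<subseteq> S"
    and ind: "chains_indep m k x"
    using F by (auto simp: jordan_family_def)
  have below: "z s - g *s x i1 s \<in> vec.span (chain_vecs_below m k x i1 s)" if "s < k i1" for s
    using agreement_descends_chain[where w=z, OF ch i1 jordan_chain_step[OF z] top that] by simp
  have "x i t \<in> vec.span (chain_vecs m k (x(i1 := z)))" if "i < m" "t < k i" for i t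
    using chain_vec_in_span_exchanged[OF i1 g below] chain_vecs_mem[of i m t k "x(i1 := z)"] that
    by (cases "i = i1") (auto simp: vec.span_base)
  then have "chain_vecs m k x \<subseteq> vec.span (chain_vecs m k (x(i1 := z)))"
    unfolding chain_vecs_def[of m k x] by blast
  then have "S \<subseteq> vec.span (chain_vecs m k (x(i1 := z)))"
    unfolding sp[symmetric] by (intro vec.span_minimal) auto
  moreover have new: "chain_vecs m k (x(i1 := z)) \<subseteq> S"
    using sub zS by (auto simp: chain_vecs_def)
  moreover have "vec.subspace S" using sp vec.subspace_span by blast
  ultimately have span': "vec.span (chain_vecs m k (x(i1 := z))) = S"
    using vec.span_minimal by blast
  have "vec.dim S = (\<Sum>i<m. k i)"
    using dim_chain_vecs[OF ind] sp vec.dim_span by metis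
  then have "chains_indep m k (x(i1 := z))"
    using new span' by (intro chains_indep_if_spanning[OF new]) simp_all
  moreover have "\<forall>i<m. jordan_chain A (lam i) (k i) ((x(i1 := z)) i)" using ch z by auto
  ultimately show ?thesis using new span' unfolding jordan_family_def by blast
qed

definition polyclosure_weight :: "nat \<Rightarrow> (nat \<Rightarrow> nat) \<Rightarrow> (nat \<Rightarrow> nat \<Rightarrow> complex^'n) \<Rightarrow> nat" where
  "polyclosure_weight m k x = (\<Sum>i<m. vec.dim (polyclosure (vec.span (x i ` {..<k i}))))"

lemma polyclosure_weight_less:
  assumes "i1 < m"
    "vec.dim (polyclosure (vec.span (z ` {..<k i1}))) < vec.dim (polyclosure (vec.span (x i1 ` {..<k i1})))"
  shows "polyclosure_weight m k (x(i1 := z)) < polyclosure_weight m k x"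
  unfolding polyclosure_weight_def
  by (rule sum_strict_mono_ex1) (use assms in auto)

lemma dim_polyclosure_less:
  assumes "polyclosure U \<subset> polyclosure J"
  shows "vec.dim (polyclosure U) < vec.dim (polyclosure J)"
proof -
  have e: "vec.span (polyclosure U) = polyclosure U" "vec.span (polyclosure J) = polyclosure J"
    by (simp_all add: subspace_polyclosure)
  show ?thesis using vec.dim_psubset[of "polyclosure U" "polyclosure J"] assms unfolding e by blast
qed

text \<open>Subtracting from a chain \<open>x\<close> a polynomial in \<open>A - \<lambda>\<close> applied to the top of another
  chain \<open>u\<close> of the same length keeps it a chain; the coefficients \<open>e\<close> can be chosen so that the
  result does not separate two cells \<open>a, b\<close> separated by \<open>u 0\<close>, because then the conditions
  form a triangular system.\<close>

definition chain_correction ::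
    "(nat \<Rightarrow> complex^'n) \<Rightarrow> (nat \<Rightarrow> complex) \<Rightarrow> (nat \<Rightarrow> complex^'n) \<Rightarrow> nat \<Rightarrow> complex^'n" where
  "chain_correction x e u s = x s - (\<Sum>l\<le>s. e l *s u (s - l))"

lemma chain_correction_recursion:
  assumes x: "jordan_chain A lam K x" and u: "jordan_chain A lam K u"
  shows "eig_shift A lam (chain_correction x e u 0) = 0"
    and "Suc s < K \<Longrightarrow> eig_shift A lam (chain_correction x e u (Suc s)) = chain_correction x e u s"
proof -
  show "eig_shift A lam (chain_correction x e u 0) = 0"
    using jordan_chain_eigvec[OF x] jordan_chain_eigvec[OF u]
    by (simp add: chain_correction_def eig_shift_diff eig_shift_scale)
  assume s: "Suc s < K"
  have "e l *s eig_shift A lam (u (Suc s - l)) = e l *s u (s - l)" if "l \<le> s" for l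
    using that s jordan_chain_step[OF u, of "s - l"] by (simp add: Suc_diff_le)
  then have "(\<Sum>l\<le>s. e l *s eig_shift A lam (u (Suc s - l))) = (\<Sum>l\<le>s. e l *s u (s - l))"
    by (intro sum.cong) auto
  then have "eig_shift A lam (\<Sum>l\<le>Suc s. e l *s u (Suc s - l)) = (\<Sum>l\<le>s. e l *s u (s - l))"
    using jordan_chain_eigvec[OF u] by (simp add: eig_shift_add eig_shift_sum eig_shift_scale)
  then show "eig_shift A lam (chain_correction x e u (Suc s)) = chain_correction x e u s"
    using jordan_chain_step[OF x s] by (simp add: chain_correction_def eig_shift_diff)
qed

lemma chain_correction_synchronizes:
  assumes "u 0 $ a \<noteq> u 0 $ b"
  shows "\<exists>e. \<forall>s<K. chain_correction x e u s $ a = chain_correction x e u s $ b"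
proof -
  obtain e where e: "\<forall>s<K. x s $ a - x s $ b = (\<Sum>l\<le>s. e l * (u (s - l) $ a - u (s - l) $ b))"
    using triangular_convolution_solvable[where Y="\<lambda>s. u s $ a - u s $ b" and X="\<lambda>s. x s $ a - x s $ b" and n=K] assms
    by auto
  have comp: "chain_correction x e u s $ c = x s $ c - (\<Sum>l\<le>s. e l * u (s - l) $ c)" for s c
    by (simp add: chain_correction_def)
  have "(\<Sum>l\<le>s. e l * (u (s - l) $ a - u (s - l) $ b))
      = (\<Sum>l\<le>s. e l * u (s - l) $ a) - (\<Sum>l\<le>s. e l * u (s - l) $ b)" for s
    by (simp add: right_diff_distrib sum_subtractf)
  with e show ?thesis by (intro exI[of _ e]) (auto simp: comp algebra_simps)
qed

lemma jordan_family_exchange_corrected: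
  assumes F: "jordan_family A S m lam k x" and sp: "vec.span (chain_vecs m k x) = S" and i1: "i1 < m"
    and u: "jordan_chain A (lam i1) (k i1) u"
    and u_below: "\<And>s. s < k i1 \<Longrightarrow> u s \<in> vec.span (chain_vecs_below m k x i1 (k i1 - 1))"
    and ab: "u 0 $ a \<noteq> u 0 $ b"
    and P: "vec.subspace P" "\<And>s. s < k i1 \<Longrightarrow> x i1 s \<in> P \<and> u s \<in> P" "P \<subseteq> S"
  shows "\<exists>y. jordan_family A S m lam k (x(i1 := y)) \<and> vec.span (chain_vecs m k (x(i1 := y))) = S
           \<and> (\<forall>s<k i1. y s \<in> P \<and> y s $ a = y s $ b)"
proof -
  have ch: "\<forall>i<m. jordan_chain A (lam i) (k i) (x i)" and ind: "chains_indep m k x"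
    using F by (auto simp: jordan_family_def)
  have chi: "jordan_chain A (lam i1) (k i1) (x i1)" using ch i1 by simp
  obtain e where e: "\<forall>s<k i1. chain_correction (x i1) e u s $ a = chain_correction (x i1) e u s $ b"
    using chain_correction_synchronizes[where x="x i1" and K="k i1" and u=u, OF ab] by blast
  define y where "y = chain_correction (x i1) e u"
  note rec = chain_correction_recursion[OF chi u, where e=e, folded y_def]
  have K1: "k i1 \<ge> 1" using jordan_chain_length_pos[OF chi] .
  have "(\<Sum>l\<le>k i1 - 1. e l *s u (k i1 - 1 - l)) \<in> vec.span (chain_vecs_below m k x i1 (k i1 - 1))"
    using u_below K1 by (intro vec.span_sum vec.span_scale) auto
  then have top: "y (k i1 - 1) - 1 *s x i1 (k i1 - 1) \<in> vec.span (chain_vecs_below m k x i1 (k i1 - 1))"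
    by (simp add: y_def chain_correction_def vec.span_neg)
  have "y s \<noteq> 0" if "s < k i1" for s
  proof
    assume "y s = 0"
    then have "x i1 s \<in> vec.span (chain_vecs_below m k x i1 s)"
      using agreement_descends_chain[OF ch i1 rec(2) top that] vec.span_neg by fastforce
    with chain_vec_notin_span_below[OF ind i1 that] show False ..
  qed
  then have "jordan_chain A (lam i1) (k i1) y" by (intro jordan_chainI K1 rec)
  moreover have yP: "y s \<in> P" if "s < k i1" for s
    unfolding y_def chain_correction_def using P(2) that
    by (intro vec.subspace_diff[OF P(1)] vec.subspace_sum[OF P(1)] vec.subspace_scale[OF P(1)]) auto
  ultimately have "jordan_family A S m lam k (x(i1 := y)) \<and> vec.span (chain_vecs m k (x(i1 := y))) = S"
    using P(3) by (intro jordan_family_exchange[where g=1, OF F sp i1]) (use top in auto)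
  then show ?thesis using yP e by (auto simp: y_def)
qed

lemma subspace_coord_eq: "vec.subspace {v::complex^'n. v $ a = v $ b}"
  unfolding vec.subspace_def by auto

text \<open>The eigenvector \<open>u 0\<close> of a competitor \<open>U\<close> of the chain span \<open>J\<close> is not fully
  synchronous, so it separates two cells \<open>a, b\<close>, which \<open>J\<close> then separates as well.  Either \<open>U\<close>
  can replace the chain directly, or correcting the chain along \<open>U\<close> synchronizes \<open>a, b\<close>; in both
  cases the polydiagonal closure of the new chain span is strictly smaller than that of \<open>J\<close>.\<close>

lemma jordan_family_improve:
  assumes reg: "regular_network A" and syn: "synchrony_subspace A S"
    and F: "jordan_family A S m lam k x" and sp: "vec.span (chain_vecs m k x) = S" and i1: "i1 < m"
    and ns: "\<not> special_jordan_subspace A (vec.span (x i1 ` {..<k i1}))"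
  shows "\<exists>x'. jordan_family A S m lam k x' \<and> vec.span (chain_vecs m k x') = S
             \<and> polyclosure_weight m k x' < polyclosure_weight m k x"
proof -
  define K where "K = k i1"
  define J where "J = vec.span (x i1 ` {..<K})"
  define PJ where "PJ = polyclosure J"
  have chi: "jordan_chain A (lam i1) K (x i1)" using F i1 by (simp add: jordan_family_def K_def)
  have K1: "K \<ge> 1" using jordan_chain_length_pos[OF chi] .
  obtain U where U: "jordan_subspace A (lam i1) U" "vec.dim U = vec.dim J"
    "polyclosure U \<subset> PJ" "U \<noteq> full_sync"
    using ns chi unfolding special_jordan_subspace_def jordan_subspace_def J_def K_def PJ_def by blast
  obtain K' u where u: "jordan_chain A (lam i1) K' u" "U = vec.span (u ` {..<K'})"
    using U(1) unfolding jordan_subspace_def by blast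
  moreover have "K' = K"
    using U(2) dim_jordan_chain_span[OF chi] dim_jordan_chain_span[OF u(1)] u(2) J_def by simp
  ultimately have uc: "jordan_chain A (lam i1) K u" and Uu: "U = vec.span (u ` {..<K})" by simp_all
  have "u 0 \<notin> full_sync" using jordan_chain_eigvec_not_full_sync[OF reg uc] U(4) Uu by blast
  then obtain a b where ab: "u 0 $ a \<noteq> u 0 $ b" unfolding full_sync_def by blast
  have "J \<subseteq> S"
    unfolding J_def K_def sp[symmetric] using chain_vecs_mem[OF i1] by (intro vec.span_mono) auto
  moreover have "polydiagonal S" using syn by (simp add: synchrony_subspace_def)
  ultimately have PJ: "vec.subspace PJ" "J \<subseteq> PJ" "PJ \<subseteq> S"
    unfolding PJ_def by (simp_all add: subspace_polyclosure polyclosure_superset polyclosure_minimal)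
  have uPJ: "u s \<in> PJ" if "s < K" for s
    using Uu that U(3) polyclosure_superset[of U] by (auto intro: vec.span_base)
  have xPJ: "x i1 s \<in> PJ" if "s < K" for s
    using PJ(2) that unfolding J_def by (auto intro: vec.span_base)
  have "u 0 \<in> PJ" using uPJ K1 by simp
  then obtain w where w: "w \<in> J" "w $ a \<noteq> w $ b"
    using ab unfolding PJ_def mem_polyclosure by blast
  have "\<exists>y. jordan_family A S m lam k (x(i1 := y)) \<and> vec.span (chain_vecs m k (x(i1 := y))) = S
           \<and> polyclosure (vec.span (y ` {..<K})) \<subset> PJ"
  proof -
    have "u (K - 1) \<in> vec.span (insert (x i1 (K - 1)) (chain_vecs_below m k x i1 (K - 1)))"
      using uPJ[of "K - 1"] PJ(3) K1 sp chain_vecs_split_top[OF i1, of k x] unfolding K_def by auto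
    then obtain g where g: "u (K - 1) - g *s x i1 (K - 1) \<in> vec.span (chain_vecs_below m k x i1 (K - 1))"
      unfolding vec.span_insert by blast
    show ?thesis
    proof (cases "g = 0")
      case False
      have "jordan_family A S m lam k (x(i1 := u)) \<and> vec.span (chain_vecs m k (x(i1 := u))) = S"
        by (rule jordan_family_exchange[OF F sp i1 _ _ False]) (use uc uPJ PJ(3) g in \<open>auto simp: K_def\<close>)
      then show ?thesis using U(3) Uu by blast
    next
      case True
      have ch: "\<forall>i<m. jordan_chain A (lam i) (k i) (x i)" using F by (simp add: jordan_family_def)
      have "u s \<in> vec.span (chain_vecs_below m k x i1 (K - 1))" if "s < K" for s
      proof -
        have "u s - g *s x i1 s \<in> vec.span (chain_vecs_below m k x i1 s)"
          using agreement_descends_chain[where w=u and g=g, OF ch i1 _ _ that[unfolded K_def]]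
            jordan_chain_step[OF uc] g by (simp add: K_def)
        moreover have "vec.span (chain_vecs_below m k x i1 s) \<subseteq> vec.span (chain_vecs_below m k x i1 (K - 1))"
          using that by (intro vec.span_mono chain_vecs_below_mono) simp
        ultimately show ?thesis using True by auto
      qed
      then obtain y where y: "jordan_family A S m lam k (x(i1 := y))"
          "vec.span (chain_vecs m k (x(i1 := y))) = S" "\<forall>s<K. y s \<in> PJ \<and> y s $ a = y s $ b"
        using jordan_family_exchange_corrected[where u=u, OF F sp i1 _ _ ab PJ(1) _ PJ(3)] uc uPJ xPJ
        unfolding K_def by blast
      have span_y: "vec.span (y ` {..<K}) \<subseteq> PJ \<inter> {v. v $ a = v $ b}"
        using y(3) PJ(1) subspace_coord_eq
        by (intro vec.span_minimal) (auto intro: vec.subspace_inter)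
      then have "polyclosure (vec.span (y ` {..<K})) \<subseteq> PJ"
        unfolding PJ_def by (intro polyclosure_minimal[OF polydiagonal_polyclosure]) auto
      moreover have "w \<notin> polyclosure (vec.span (y ` {..<K}))"
        using span_y w(2) by (auto simp: mem_polyclosure)
      ultimately show ?thesis using w(1) PJ(2) y(1,2) by blast
    qed
  qed
  then obtain y where "jordan_family A S m lam k (x(i1 := y))" "vec.span (chain_vecs m k (x(i1 := y))) = S"
    "polyclosure (vec.span (y ` {..<K})) \<subset> PJ" by blast
  with dim_polyclosure_less polyclosure_weight_less[OF i1] show ?thesis
    unfolding PJ_def J_def K_def by blast
qed

lemma special_jordan_family_exists:
  assumes reg: "regular_network A" and syn: "synchrony_subspace A S"
  shows "\<exists>m lam k x. jordan_family A S m lam k x \<and> vec.span (chain_vecs m k x) = S \<and>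
           (\<forall>i<m. special_jordan_subspace A (vec.span (x i ` {..<k i})))"
proof -
  obtain m0 lam0 k0 x0 where F0: "jordan_family A S m0 lam0 k0 x0" "vec.span (chain_vecs m0 k0 x0) = S"
    using jordan_family_spanning_exists[OF syn] by blast
  define Q where "Q = (\<lambda>(m, lam, k, x). jordan_family A S m lam k x \<and> vec.span (chain_vecs m k x) = S)"
  define \<mu> where "\<mu> = (\<lambda>(m::nat, lam::nat \<Rightarrow> complex, k::nat \<Rightarrow> nat, x::nat \<Rightarrow> nat \<Rightarrow> complex^'a). polyclosure_weight m k x)"
  have "Q (m0, lam0, k0, x0)" using F0 by (simp add: Q_def)
  from ex_has_least_nat[of Q _ \<mu>, OF this]
  obtain t where t: "Q t" "\<And>t'. Q t' \<Longrightarrow> \<mu> t \<le> \<mu> t'" by blast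
  obtain m lam k x where tt: "t = (m, lam, k, x)" by (cases t) auto
  have F: "jordan_family A S m lam k x" "vec.span (chain_vecs m k x) = S" using t(1) tt by (auto simp: Q_def)
  have "\<forall>i<m. special_jordan_subspace A (vec.span (x i ` {..<k i}))"
  proof (intro allI impI)
    fix i1 assume i1: "i1 < m"
    show "special_jordan_subspace A (vec.span (x i1 ` {..<k i1}))"
    proof (rule ccontr)
      assume "\<not> special_jordan_subspace A (vec.span (x i1 ` {..<k i1}))"
      from jordan_family_improve[OF reg syn F i1 this] obtain x' where
        x': "jordan_family A S m lam k x'" "vec.span (chain_vecs m k x') = S" "polyclosure_weight m k x' < polyclosure_weight m k x" by blast
      have "Q (m, lam, k, x')" using x' by (simp add: Q_def)
      from t(2)[OF this] have "polyclosure_weight m k x \<le> polyclosure_weight m k x'" using tt by (simp add: \<mu>_def)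
      with x'(3) show False by simp
    qed
  qed
  then show ?thesis using F by blast
qed

lemma span_chain_combinations:
  fixes x :: "nat \<Rightarrow> complex^'n"
  shows "vec.span (x ` {..<k}) = {(\<Sum>t<k. c t *s x t) | c. True}"
proof -
  have "vec.span (x ` {..<k}) = vec.span (chain_vecs (Suc 0) (\<lambda>_. k) (\<lambda>_. x))" by (simp add: chain_vecs_single)
  also have "\<dots> = {(\<Sum>i<Suc 0. \<Sum>t<k. c i t *s x t) | c. True}" by (rule span_chain_vecs)
  also have "\<dots> = {(\<Sum>t<k. c t *s x t) | c. True}"
  proof (rule set_eqI, rule iffI)
    fix v assume "v \<in> {(\<Sum>i<Suc 0. \<Sum>t<k. c i t *s x t) | c. True}"
    then obtain c where "v = (\<Sum>i<Suc 0. \<Sum>t<k. c i t *s x t)" by blast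
    then show "v \<in> {(\<Sum>t<k. c t *s x t) | c. True}" by (intro CollectI exI[of _ "c 0"]) simp
  next
    fix v assume "v \<in> {(\<Sum>t<k. c t *s x t) | c. True}"
    then obtain c where "v = (\<Sum>t<k. c t *s x t)" by blast
    then show "v \<in> {(\<Sum>i<Suc 0. \<Sum>t<k. c i t *s x t) | c. True}" by (intro CollectI exI[of _ "\<lambda>_. c"]) simp
  qed
  finally show ?thesis .
qed

lemma is_direct_sum_chain_spans:
  assumes ind: "chains_indep m k x" and sp: "vec.span (chain_vecs m k x) = S"
  shows "is_direct_sum S m (\<lambda>i. vec.span (x i ` {..<k i}))"
  unfolding is_direct_sum_def
proof (intro conjI allI impI)
  have Ssub: "vec.subspace S" using sp by (metis vec.subspace_span)
  have JS: "vec.span (x i ` {..<k i}) \<subseteq> S" if "i < m" for i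
    using vec.span_mono[OF chain_subset_chain_vecs[OF that]] sp by blast
  show "S = {\<Sum>i<m. y i |y. \<forall>i<m. y i \<in> vec.span (x i ` {..<k i})}"
  proof
    show "S \<subseteq> {\<Sum>i<m. y i |y. \<forall>i<m. y i \<in> vec.span (x i ` {..<k i})}"
    proof
      fix v assume "v \<in> S"
      then obtain c where c: "v = (\<Sum>i<m. \<Sum>t<k i. c i t *s x i t)" using sp span_chain_vecs by blast
      have "\<forall>i<m. (\<Sum>t<k i. c i t *s x i t) \<in> vec.span (x i ` {..<k i})"
        by (intro allI impI vec.span_sum vec.span_scale vec.span_base) auto
      then show "v \<in> {\<Sum>i<m. y i |y. \<forall>i<m. y i \<in> vec.span (x i ` {..<k i})}"
        using c by blast
    qed
  next
    show "{\<Sum>i<m. y i |y. \<forall>i<m. y i \<in> vec.span (x i ` {..<k i})} \<subseteq> S"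
    proof
      fix v assume "v \<in> {\<Sum>i<m. y i |y. \<forall>i<m. y i \<in> vec.span (x i ` {..<k i})}"
      then obtain y where y: "v = (\<Sum>i<m. y i)" "\<forall>i<m. y i \<in> vec.span (x i ` {..<k i})" by blast
      show "v \<in> S" unfolding y(1) by (rule vec.subspace_sum[OF Ssub]) (use y(2) JS in auto)
    qed
  qed
next
  fix y assume y: "(\<forall>i<m. y i \<in> vec.span (x i ` {..<k i})) \<and> (\<Sum>i<m. y i) = 0"
  have "\<forall>i. \<exists>c. i < m \<longrightarrow> y i = (\<Sum>t<k i. c t *s x i t)"
    using y span_chain_combinations by blast
  then obtain C where C: "\<And>i. i < m \<Longrightarrow> y i = (\<Sum>t<k i. C i t *s x i t)" by metis
  have "(\<Sum>i<m. \<Sum>t<k i. C i t *s x i t) = 0" using y C by simp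
  then have C0: "\<forall>i<m. \<forall>t<k i. C i t = 0" using ind unfolding chains_indep_def by blast
  fix i assume "i < m"
  then show "y i = 0" using C C0 by simp
qed

lemma jordan_subspace_invariant:
  assumes "jordan_subspace A lam W" "z \<in> W"
  shows "cmat A *v z \<in> W"
  using assms eig_shift_jordan_subspace[of A lam _ _ z 0]
  unfolding jordan_subspace_def cmat_eq_eig_shift_0 by blast

lemma synchrony_subspace_if_invariant_direct_sum:
  assumes pd: "polydiagonal S" and inv: "\<And>i z. i < m \<Longrightarrow> z \<in> J i \<Longrightarrow> cmat A *v z \<in> J i"
    and ds: "is_direct_sum S m J"
  shows "synchrony_subspace A S"
  unfolding synchrony_subspace_def
proof (intro conjI ballI)
  show "polydiagonal S" by (rule pd)
  fix z assume "z \<in> S"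
  then obtain y where y: "z = (\<Sum>i<m. y i)" "\<forall>i<m. y i \<in> J i"
    using ds unfolding is_direct_sum_def by blast
  have "cmat A *v z = (\<Sum>i<m. cmat A *v y i)" using y(1) by (simp add: matrix_vector_mult_sum)
  moreover have "\<forall>i<m. cmat A *v y i \<in> J i" using y(2) inv by blast
  ultimately show "cmat A *v z \<in> S" using ds unfolding is_direct_sum_def by blast
qed

theorem mainTheorem7:
  fixes A :: "nat^'n^'n" and S :: "(complex^'n) set"
  assumes "regular_network A"
  shows "synchrony_subspace A S \<longleftrightarrow>
           polydiagonal S \<and>
           (\<exists>m J. (\<forall>k<m. special_jordan_subspace A (J k)) \<and> is_direct_sum S m J)"
proof
  assume syn: "synchrony_subspace A S"
  then have pd: "polydiagonal S" by (simp add: synchrony_subspace_def)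
  obtain m lam k x where F: "jordan_family A S m lam k x" "vec.span (chain_vecs m k x) = S"
    and sp: "\<forall>i<m. special_jordan_subspace A (vec.span (x i ` {..<k i}))"
    using special_jordan_family_exists[OF assms syn] by blast
  have "is_direct_sum S m (\<lambda>i. vec.span (x i ` {..<k i}))"
    using F by (intro is_direct_sum_chain_spans) (simp_all add: jordan_family_def)
  then show "polydiagonal S \<and> (\<exists>m J. (\<forall>k<m. special_jordan_subspace A (J k)) \<and> is_direct_sum S m J)"
    using pd sp by (intro conjI exI[of _ m] exI[of _ "\<lambda>i. vec.span (x i ` {..<k i})"]) auto
next
  assume "polydiagonal S \<and> (\<exists>m J. (\<forall>k<m. special_jordan_subspace A (J k)) \<and> is_direct_sum S m J)"
  then obtain m J where S: "polydiagonal S" "is_direct_sum S m J"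
    and J: "\<forall>k<m. special_jordan_subspace A (J k)"
    by blast
  have "\<And>i z. i < m \<Longrightarrow> z \<in> J i \<Longrightarrow> cmat A *v z \<in> J i"
    using J jordan_subspace_invariant unfolding special_jordan_subspace_def by blast
  with S show "synchrony_subspace A S" by (intro synchrony_subspace_if_invariant_direct_sum)
qed

end
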